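(* Let $(S,\ast)$ and $(T,\ast')$ be adequate commutative partial semigroups, let $h:S\to T$ be a surjective partial semigroup homomorphism, and let $\tilde h:\beta S\to\beta T$ be the continuous extension of $h$, and suppose $\tilde h$ maps $\delta S$ onto $\delta T$. Let $A\subseteq T$ be a set that is not central in $T$, and suppose there is an idempotent $p\in\overline{A}\cap\tilde h(J_\delta(S))$. Then $h^{-1}(A)$ is a $C$-set in $S$ but is not a central set in $S$.
   Context: A partial semigroup is a pair $(S,\ast)$ where $\ast$ is an operation defined on a subset of $S\times S$ such that $(x\ast y)\ast z=x\ast(y\ast z)$ in the sense that if either side is defined, so is the other and they are equal; commutative means $x\ast y=y\ast x$ whenever defined. $\phi_S(s)=\{t: s\ast t\text{ defined}\}$, $\sigma_S(H)=\bigcap_{s\in H}\phi_S(s)$ for $H\in\mathcal{P}_f(S)$; $S$ is adequate if all $\sigma_S(H)\ne\emptyset$. A map $h:S\to T$ is a partial semigroup homomorphism if whenever $y\in\phi_S(x)$, $h(y)\in\phi_T(h(x))$ and $h(x\ast y)=h(x)\ast' h(y)$. $\tilde h(p)=\{B\subseteq T: h^{-1}(B)\in p\}$ for ultrafilters $p\in\beta S$; $\overline{A}=\{p: A\in p\}$. $\delta S=\bigcap_{x\in S}\overline{\phi_S(x)}$, with operation $p\ast q=\{A\subseteq S:\{s: s^{-1}A\in q\}\in p\}$, $s^{-1}A=\{t\in\phi_S(s): s\ast t\in A\}$; it is a compact right topological semigroup with smallest ideal $K(\delta S)$ (similarly for $T$). A set is central if it belongs to some idempotent in $K(\delta S)$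 (resp. $K(\delta T)$). A sequence $\langle y_n\rangle$ in $S$ is adequate if $\prod_{n\in F}y_n$ is defined for every $F\in\mathcal{P}_f(\mathbb{N})$ and for every $K\in\mathcal{P}_f(S)$ there is $m$ with $\prod_{n\in F}y_n\in\sigma_S(K)$ whenever $\min F\ge m$; $\mathcal{T}_S$ is the set of adequate sequences. For $W\in\mathcal{P}_f(S)$, $a\in S$, $W\ast a=\{w\ast a: w\in W,\ w\ast a\text{ defined}\}$. $B$ is a $J_\delta$-set if for every $F\in\mathcal{P}_f(\mathcal{T}_S)$ and $W\in\mathcal{P}_f(S)$ there exist $a\in\sigma_S(W)$, $H\in\mathcal{P}_f(\mathbb{N})$ with $\prod_{t\in H}f(t)\in\sigma_S(W\ast a)$ and $a\ast\prod_{t\in H}f(t)\in B$ for each $f\in F$; $J_\delta(S)=\{p\in\delta S:\text{every member of }p\text{ is a }J_\delta\text{-set}\}$. $A$ is a $C$-set if there exist $\alpha:\mathcal{P}_f(\mathcal{T}_S)\to S$ and $H:\mathcal{P}_f(\mathcal{T}_S)\to\mathcal{P}_f(\mathbb{N})$ such that (1) $F\subsetneq G$ implies $\max H(F)<\min H(G)$, and (2) whenever $G_1\subsetneq\cdots\subsetneq G_m$ in $\mathcal{P}_f(\mathcal{T}_S)$ and $f_i\in G_i$, $\prod_{i=1}^m\big(\alpha(G_i)\ast\prod_{t\in H(G_i)}f_i(t)\big)\in A$. *)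

theory Defs
  imports Main
begin

(* A partial semigroup on a type 'a: the operation is 'a => 'a => 'a option,
   None meaning "undefined". *)
type_synonym 'a pop = "'a \<Rightarrow> 'a \<Rightarrow> 'a option"

definition psemigroup :: "'a pop \<Rightarrow> bool" where
  "psemigroup op \<longleftrightarrow>
     (\<forall>x y z. Option.bind (op x y) (\<lambda>u. op u z) = Option.bind (op y z) (\<lambda>v. op x v))"

definition pcomm :: "'a pop \<Rightarrow> bool" where
  "pcomm op \<longleftrightarrow> (\<forall>x y. op x y = op y x)"

definition phi :: "'a pop \<Rightarrow> 'a \<Rightarrow> 'a set" where
  "phi op s = {t. op s t \<noteq> None}"

definition sigma :: "'a pop \<Rightarrow> 'a set \<Rightarrow> 'a set" where
  "sigma op H = (\<Inter>s\<in>H. phi op s)"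

definition adequate :: "'a pop \<Rightarrow> bool" where
  "adequate op \<longleftrightarrow> (\<forall>H. finite H \<and> H \<noteq> {} \<longrightarrow> sigma op H \<noteq> {})"

definition phom :: "'a pop \<Rightarrow> 'b pop \<Rightarrow> ('a \<Rightarrow> 'b) \<Rightarrow> bool" where
  "phom op op' h \<longleftrightarrow>
     (\<forall>x y. y \<in> phi op x \<longrightarrow> h y \<in> phi op' (h x) \<and> op' (h x) (h y) = map_option h (op x y))"

definition ultrafilter_on :: "'a set set \<Rightarrow> bool" where
  "ultrafilter_on p \<longleftrightarrow> UNIV \<in> p \<and> {} \<notin> p \<and>
     (\<forall>A B. A \<in> p \<and> A \<subseteq> B \<longrightarrow> B \<in> p) \<and>
     (\<forall>A B. A \<in> p \<and> B \<in> p \<longrightarrow> A \<inter> B \<in> p) \<and>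
     (\<forall>A. A \<in> p \<or> - A \<in> p)"

definition betaS :: "'a set set set" where
  "betaS = {p. ultrafilter_on p}"

definition htilde :: "('a \<Rightarrow> 'b) \<Rightarrow> 'a set set \<Rightarrow> 'b set set" where
  "htilde h p = {B. h -` B \<in> p}"

definition deltaS :: "'a pop \<Rightarrow> 'a set set set" where
  "deltaS op = {p \<in> betaS. \<forall>x. phi op x \<in> p}"

definition sinv :: "'a pop \<Rightarrow> 'a \<Rightarrow> 'a set \<Rightarrow> 'a set" where
  "sinv op s A = {t \<in> phi op s. the (op s t) \<in> A}"

definition ustar :: "'a pop \<Rightarrow> 'a set set \<Rightarrow> 'a set set \<Rightarrow> 'a set set" where
  "ustar op p q = {A. {s. sinv op s A \<in> q} \<in> p}"

definition is_ideal :: "'a pop \<Rightarrow> 'a set set set \<Rightarrow> bool" where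
  "is_ideal op I \<longleftrightarrow> I \<noteq> {} \<and> I \<subseteq> deltaS op \<and>
     (\<forall>p\<in>deltaS op. \<forall>q\<in>I. ustar op p q \<in> I \<and> ustar op q p \<in> I)"

definition Kmin :: "'a pop \<Rightarrow> 'a set set set" where
  "Kmin op = (THE K. is_ideal op K \<and> (\<forall>J. is_ideal op J \<longrightarrow> K \<subseteq> J))"

definition central :: "'a pop \<Rightarrow> 'a set \<Rightarrow> bool" where
  "central op A \<longleftrightarrow> (\<exists>p\<in>Kmin op. ustar op p p = p \<and> A \<in> p)"

fun oprod :: "'a pop \<Rightarrow> 'a option list \<Rightarrow> 'a option" where
  "oprod op [] = None"
| "oprod op (x # xs) =
     foldl (\<lambda>acc y. Option.bind acc (\<lambda>a. Option.bind y (\<lambda>b. op a b))) x xs"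

definition pprod :: "'a pop \<Rightarrow> (nat \<Rightarrow> 'a) \<Rightarrow> nat set \<Rightarrow> 'a option" where
  "pprod op f F = oprod op (map (\<lambda>n. Some (f n)) (sorted_list_of_set F))"

definition Pf :: "'x set \<Rightarrow> 'x set set" where
  "Pf X = {F. F \<subseteq> X \<and> finite F \<and> F \<noteq> {}}"

definition adequate_seq :: "'a pop \<Rightarrow> (nat \<Rightarrow> 'a) \<Rightarrow> bool" where
  "adequate_seq op f \<longleftrightarrow>
     (\<forall>F\<in>Pf UNIV. pprod op f F \<noteq> None) \<and>
     (\<forall>K\<in>Pf UNIV. \<exists>m. \<forall>F\<in>Pf UNIV. Min F \<ge> m \<longrightarrow> the (pprod op f F) \<in> sigma op K)"

definition TS :: "'a pop \<Rightarrow> (nat \<Rightarrow> 'a) set" where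
  "TS op = {f. adequate_seq op f}"

definition Wmul :: "'a pop \<Rightarrow> 'a set \<Rightarrow> 'a \<Rightarrow> 'a set" where
  "Wmul op W a = {c. \<exists>w\<in>W. op w a = Some c}"

definition Jdelta_set :: "'a pop \<Rightarrow> 'a set \<Rightarrow> bool" where
  "Jdelta_set op B \<longleftrightarrow>
     (\<forall>F\<in>Pf (TS op). \<forall>W\<in>Pf UNIV. \<exists>a\<in>sigma op W. \<exists>H\<in>Pf UNIV.
        \<forall>f\<in>F. the (pprod op f H) \<in> sigma op (Wmul op W a) \<and>
               op a (the (pprod op f H)) \<in> Some ` B)"

definition Jdelta :: "'a pop \<Rightarrow> 'a set set set" where
  "Jdelta op = {p \<in> deltaS op. \<forall>B\<in>p. Jdelta_set op B}"

definition C_set :: "'a pop \<Rightarrow> 'a set \<Rightarrow> bool" where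
  "C_set op A \<longleftrightarrow>
     (\<exists>(\<alpha> :: (nat \<Rightarrow> 'a) set \<Rightarrow> 'a) (H :: (nat \<Rightarrow> 'a) set \<Rightarrow> nat set).
        (\<forall>F\<in>Pf (TS op). H F \<in> Pf UNIV) \<and>
        (\<forall>F\<in>Pf (TS op). \<forall>G\<in>Pf (TS op). F \<subset> G \<longrightarrow> Max (H F) < Min (H G)) \<and>
        (\<forall>Gs fs. Gs \<noteq> [] \<and> length fs = length Gs \<and>
           (\<forall>i<length Gs. Gs ! i \<in> Pf (TS op) \<and> fs ! i \<in> Gs ! i) \<and>
           (\<forall>i. Suc i < length Gs \<longrightarrow> Gs ! i \<subset> Gs ! Suc i) \<longrightarrow>
           oprod op (map (\<lambda>i. Option.bind (pprod op (fs ! i) (H (Gs ! i))) (\<lambda>y. op (\<alpha> (Gs ! i)) y))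
                        [0..<length Gs]) \<in> Some ` A))"

end

theory Submission
  imports Defs
begin

section \<open>Ultrafilters\<close>

lemma ultrafilter_UNIV: "ultrafilter_on p \<Longrightarrow> UNIV \<in> p"
  and ultrafilter_empty: "ultrafilter_on p \<Longrightarrow> {} \<notin> p"
  and ultrafilter_mono: "ultrafilter_on p \<Longrightarrow> A \<in> p \<Longrightarrow> A \<subseteq> B \<Longrightarrow> B \<in> p"
  and ultrafilter_Int: "ultrafilter_on p \<Longrightarrow> A \<in> p \<Longrightarrow> B \<in> p \<Longrightarrow> A \<inter> B \<in> p"
  unfolding ultrafilter_on_def by blast+

lemma ultrafilter_Int_iff: "ultrafilter_on p \<Longrightarrow> A \<inter> B \<in> p \<longleftrightarrow> A \<in> p \<and> B \<in> p"
  by (meson inf_le1 inf_le2 ultrafilter_Int ultrafilter_mono)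

lemma ultrafilter_Compl_iff:
  assumes "ultrafilter_on p" shows "- A \<in> p \<longleftrightarrow> A \<notin> p"
proof -
  have "A \<inter> - A \<notin> p" using ultrafilter_empty[OF assms] by simp
  then show ?thesis using assms ultrafilter_Int_iff unfolding ultrafilter_on_def by blast
qed

lemma ultrafilter_nonempty: "ultrafilter_on p \<Longrightarrow> A \<in> p \<Longrightarrow> \<exists>x. x \<in> A"
  using ultrafilter_empty by (metis ex_in_conv)

lemma ultrafilter_subset_eq:
  assumes "ultrafilter_on p" "ultrafilter_on q" "p \<subseteq> q" shows "p = q"
proof -
  have "A \<in> p" if "A \<in> q" for A
    using that assms ultrafilter_Compl_iff[of p A] ultrafilter_Compl_iff[of q A] by blast
  then show ?thesis using assms(3) by blast
qed

lemma ultrafilter_INT: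
  assumes "ultrafilter_on p" "finite M" "\<And>x. x \<in> M \<Longrightarrow> X x \<in> p"
  shows "(\<Inter>x\<in>M. X x) \<in> p"
  using assms(2,3) by induction (auto intro: ultrafilter_UNIV ultrafilter_Int assms(1))

lemma ultrafilter_cong_on: "ultrafilter_on p \<Longrightarrow> P \<in> p \<Longrightarrow> X \<inter> P = Y \<inter> P \<Longrightarrow> X \<in> p \<longleftrightarrow> Y \<in> p"
  by (metis ultrafilter_Int_iff)

lemma ultrafilter_htilde:
  assumes p: "ultrafilter_on p" shows "ultrafilter_on (htilde h p)"
  unfolding ultrafilter_on_def htilde_def mem_Collect_eq vimage_Int vimage_Compl
proof (intro conjI allI impI)
  show "h -` UNIV \<in> p" "h -` {} \<notin> p" using ultrafilter_UNIV[OF p] ultrafilter_empty[OF p] by simp_all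
  fix A B
  show "h -` A \<in> p \<and> A \<subseteq> B \<Longrightarrow> h -` B \<in> p"
    using ultrafilter_mono[OF p, of "h -` A" "h -` B"] by blast
  show "h -` A \<in> p \<and> h -` B \<in> p \<Longrightarrow> h -` A \<inter> h -` B \<in> p"
    using ultrafilter_Int[OF p, of "h -` A" "h -` B"] by blast
  show "h -` A \<in> p \<or> - h -` A \<in> p" using ultrafilter_Compl_iff[OF p, of "h -` A"] by blast
qed

definition proper_filter :: "'a set set \<Rightarrow> bool" where
  "proper_filter F \<longleftrightarrow> UNIV \<in> F \<and> {} \<notin> F \<and> (\<forall>A B. A \<in> F \<and> A \<subseteq> B \<longrightarrow> B \<in> F) \<and>
     (\<forall>A B. A \<in> F \<and> B \<in> F \<longrightarrow> A \<inter> B \<in> F)"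

lemma proper_filterI:
  assumes "UNIV \<in> F" "{} \<notin> F" "\<And>A B. A \<in> F \<Longrightarrow> A \<subseteq> B \<Longrightarrow> B \<in> F"
    "\<And>A B. A \<in> F \<Longrightarrow> B \<in> F \<Longrightarrow> A \<inter> B \<in> F"
  shows "proper_filter F"
  unfolding proper_filter_def using assms by (intro conjI allI impI) auto

lemma proper_filterD:
  assumes "proper_filter F"
  shows "UNIV \<in> F" "{} \<notin> F" "A \<in> F \<Longrightarrow> A \<subseteq> B \<Longrightarrow> B \<in> F" "A \<in> F \<Longrightarrow> B \<in> F \<Longrightarrow> A \<inter> B \<in> F"
  using assms unfolding proper_filter_def by blast+

lemma ultrafilter_on_iff: "ultrafilter_on p \<longleftrightarrow> proper_filter p \<and> (\<forall>A. A \<in> p \<or> - A \<in> p)"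
  unfolding ultrafilter_on_def proper_filter_def by blast

lemma proper_filter_generated:
  assumes ne: "\<B> \<noteq> {}" and empty: "{} \<notin> \<B>"
    and down: "\<And>A B. A \<in> \<B> \<Longrightarrow> B \<in> \<B> \<Longrightarrow> \<exists>C\<in>\<B>. C \<subseteq> A \<inter> B"
  shows "proper_filter {X. \<exists>B\<in>\<B>. B \<subseteq> X}"
proof (rule proper_filterI)
  show "UNIV \<in> {X. \<exists>B\<in>\<B>. B \<subseteq> X}" using ne by blast
  show "{} \<notin> {X. \<exists>B\<in>\<B>. B \<subseteq> X}" using empty by auto
next
  fix A B assume "A \<in> {X. \<exists>B\<in>\<B>. B \<subseteq> X}" "A \<subseteq> B"
  then show "B \<in> {X. \<exists>B\<in>\<B>. B \<subseteq> X}" by blast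
next
  fix A B assume "A \<in> {X. \<exists>B\<in>\<B>. B \<subseteq> X}" "B \<in> {X. \<exists>B\<in>\<B>. B \<subseteq> X}"
  then obtain A' B' where "A' \<in> \<B>" "B' \<in> \<B>" "A' \<subseteq> A" "B' \<subseteq> B" by blast
  moreover obtain C where "C \<in> \<B>" "C \<subseteq> A' \<inter> B'" using down calculation(1,2) by blast
  ultimately have "C \<in> \<B> \<and> C \<subseteq> A \<inter> B" by blast
  then show "A \<inter> B \<in> {X. \<exists>B\<in>\<B>. B \<subseteq> X}" by blast
qed

lemma proper_filter_Union_chain:
  assumes "\<CC> \<in> chains {F. proper_filter F}" "\<CC> \<noteq> {}"
  shows "proper_filter (\<Union>\<CC>)"
proof -
  have filters: "\<And>F. F \<in> \<CC> \<Longrightarrow> proper_filter F" and chain: "chain\<^sub>\<subseteq> \<CC>"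
    using assms(1) unfolding chains_def by auto
  have common: "\<exists>F\<in>\<CC>. A \<in> F \<and> B \<in> F" if AB: "A \<in> \<Union>\<CC>" "B \<in> \<Union>\<CC>" for A B
  proof -
    obtain F G where "F \<in> \<CC>" "G \<in> \<CC>" "A \<in> F" "B \<in> G" using AB by blast
    moreover have "F \<subseteq> G \<or> G \<subseteq> F" using chain \<open>F \<in> \<CC>\<close> \<open>G \<in> \<CC>\<close> unfolding chain_subset_def by blast
    ultimately show ?thesis by blast
  qed
  show ?thesis
  proof (rule proper_filterI)
    show "UNIV \<in> \<Union>\<CC>" using assms(2) filters proper_filterD(1) by blast
    show "{} \<notin> \<Union>\<CC>" using filters proper_filterD(2) by blast
  next
    fix A B assume "A \<in> \<Union>\<CC>" "A \<subseteq> B"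
    then obtain F where "F \<in> \<CC>" "A \<in> F" "A \<subseteq> B" by blast
    then show "B \<in> \<Union>\<CC>" using filters proper_filterD(3) by blast
  next
    fix A B assume "A \<in> \<Union>\<CC>" "B \<in> \<Union>\<CC>"
    then obtain F where "F \<in> \<CC>" "A \<in> F" "B \<in> F" using common by blast
    then show "A \<inter> B \<in> \<Union>\<CC>" using filters proper_filterD(4) by blast
  qed
qed

text \<open>A proper filter not containing \<open>A\<close> or \<open>-A\<close> extends properly by \<open>A\<close>.\<close>

lemma maximal_proper_filter_ultrafilter:
  assumes M: "proper_filter M" and max: "\<And>F. proper_filter F \<Longrightarrow> M \<subseteq> F \<Longrightarrow> F = M"
  shows "ultrafilter_on M"
  unfolding ultrafilter_on_iff
proof (intro conjI allI M)
  fix A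
  show "A \<in> M \<or> - A \<in> M"
  proof (cases "\<exists>X\<in>M. X \<subseteq> - A")
    case True
    then obtain X where "X \<in> M" "X \<subseteq> - A" by blast
    then show ?thesis using proper_filterD(3)[OF M] by simp
  next
    case False
    define \<B> where "\<B> = (\<lambda>X. X \<inter> A) ` M"
    have "\<B> \<noteq> {}" using proper_filterD(1)[OF M] unfolding \<B>_def by blast
    moreover have "{} \<notin> \<B>"
    proof
      assume "{} \<in> \<B>"
      then obtain X where "X \<in> M" "X \<inter> A = {}" unfolding \<B>_def by auto
      then show False using False by blast
    qed
    moreover have "\<exists>Z\<in>\<B>. Z \<subseteq> Y1 \<inter> Y2" if Y: "Y1 \<in> \<B>" "Y2 \<in> \<B>" for Y1 Y2
    proof -
      obtain X1 X2 where X: "X1 \<in> M" "X2 \<in> M" "Y1 = X1 \<inter> A" "Y2 = X2 \<inter> A"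
        using Y unfolding \<B>_def by blast
      have "(X1 \<inter> X2) \<inter> A \<in> \<B>" unfolding \<B>_def using proper_filterD(4)[OF M X(1,2)] by (rule imageI)
      moreover have "(X1 \<inter> X2) \<inter> A \<subseteq> Y1 \<inter> Y2" unfolding X(3,4) by blast
      ultimately show ?thesis by blast
    qed
    ultimately have "proper_filter {Y. \<exists>Z\<in>\<B>. Z \<subseteq> Y}" by (rule proper_filter_generated)
    moreover have "M \<subseteq> {Y. \<exists>Z\<in>\<B>. Z \<subseteq> Y}" unfolding \<B>_def by blast
    ultimately have "{Y. \<exists>Z\<in>\<B>. Z \<subseteq> Y} = M" by (rule max)
    moreover have "A \<in> {Y. \<exists>Z\<in>\<B>. Z \<subseteq> Y}" using proper_filterD(1)[OF M] unfolding \<B>_def by blast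
    ultimately show ?thesis by simp
  qed
qed

lemma proper_filter_ultrafilter_extend:
  assumes F0: "proper_filter F0"
  shows "\<exists>p. ultrafilter_on p \<and> F0 \<subseteq> p"
proof -
  define \<FF> where "\<FF> = {F. proper_filter F \<and> F0 \<subseteq> F}"
  have "\<exists>M\<in>\<FF>. \<forall>X\<in>\<FF>. M \<subseteq> X \<longrightarrow> X = M"
  proof (rule Zorn_Lemma2, rule ballI)
    fix \<CC> assume chain: "\<CC> \<in> chains \<FF>"
    show "\<exists>U\<in>\<FF>. \<forall>X\<in>\<CC>. X \<subseteq> U"
    proof (cases "\<CC> = {}")
      case True
      then show ?thesis using F0 unfolding \<FF>_def by blast
    next
      case False
      have "\<CC> \<subseteq> \<FF>" "chain\<^sub>\<subseteq> \<CC>" using chain unfolding chains_def by auto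
      then have "\<CC> \<in> chains {F. proper_filter F}" unfolding chains_def \<FF>_def by auto
      then have "proper_filter (\<Union>\<CC>)" using False by (rule proper_filter_Union_chain)
      moreover have "F0 \<subseteq> \<Union>\<CC>" using False \<open>\<CC> \<subseteq> \<FF>\<close> unfolding \<FF>_def by auto
      ultimately have "\<Union>\<CC> \<in> \<FF>" unfolding \<FF>_def by blast
      then show ?thesis by blast
    qed
  qed
  then obtain M where M: "M \<in> \<FF>" and max: "\<forall>X\<in>\<FF>. M \<subseteq> X \<longrightarrow> X = M" ..
  have "proper_filter M" "F0 \<subseteq> M" using M unfolding \<FF>_def by auto
  moreover have "F = M" if "proper_filter F" "M \<subseteq> F" for F
    using max that \<open>F0 \<subseteq> M\<close> unfolding \<FF>_def by blast
  ultimately show ?thesis using maximal_proper_filter_ultrafilter by blast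
qed

lemma ultrafilter_extend:
  assumes "\<B> \<noteq> {}" "{} \<notin> \<B>" "\<And>A B. A \<in> \<B> \<Longrightarrow> B \<in> \<B> \<Longrightarrow> \<exists>C\<in>\<B>. C \<subseteq> A \<inter> B"
  shows "\<exists>p. ultrafilter_on p \<and> \<B> \<subseteq> p"
proof -
  obtain p where "ultrafilter_on p" "{X. \<exists>B\<in>\<B>. B \<subseteq> X} \<subseteq> p"
    using proper_filter_ultrafilter_extend[OF proper_filter_generated[OF assms]] by blast
  then show ?thesis by blast
qed

section \<open>Closed sets of ultrafilters\<close>

text \<open>Closedness in the Stone topology of \<beta>S: every ultrafilter in the closure belongs to the set.\<close>

definition uf_closed :: "'a set set set \<Rightarrow> bool" where
  "uf_closed C \<longleftrightarrow> C \<subseteq> betaS \<and> (\<forall>p. ultrafilter_on p \<longrightarrow> (\<forall>A\<in>p. \<exists>c\<in>C. A \<in> c) \<longrightarrow> p \<in> C)"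

lemma uf_closedI:
  "(\<And>c. c \<in> C \<Longrightarrow> ultrafilter_on c) \<Longrightarrow>
   (\<And>p. ultrafilter_on p \<Longrightarrow> (\<And>A. A \<in> p \<Longrightarrow> \<exists>c\<in>C. A \<in> c) \<Longrightarrow> p \<in> C) \<Longrightarrow> uf_closed C"
  unfolding uf_closed_def betaS_def by blast

lemma uf_closed_ultrafilter: "uf_closed C \<Longrightarrow> c \<in> C \<Longrightarrow> ultrafilter_on c"
  unfolding uf_closed_def betaS_def by blast

lemma uf_closedD: "uf_closed C \<Longrightarrow> ultrafilter_on p \<Longrightarrow> (\<And>A. A \<in> p \<Longrightarrow> \<exists>c\<in>C. A \<in> c) \<Longrightarrow> p \<in> C"
  unfolding uf_closed_def by blast

lemma uf_closed_Inter_subset: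
  assumes C: "uf_closed C" and p: "ultrafilter_on p" and sub: "\<Inter>C \<subseteq> p"
  shows "p \<in> C"
proof (rule uf_closedD[OF C p])
  fix A assume A: "A \<in> p"
  show "\<exists>c\<in>C. A \<in> c"
  proof (rule ccontr)
    assume "\<not> (\<exists>c\<in>C. A \<in> c)"
    then have "- A \<in> \<Inter>C" using ultrafilter_Compl_iff[OF uf_closed_ultrafilter[OF C]] by blast
    then show False using A sub ultrafilter_Compl_iff[OF p] by blast
  qed
qed

lemma uf_closed_Inter:
  assumes "\<CC> \<noteq> {}" "\<And>C. C \<in> \<CC> \<Longrightarrow> uf_closed C"
  shows "uf_closed (\<Inter>\<CC>)"
proof (rule uf_closedI)
  show "ultrafilter_on c" if "c \<in> \<Inter>\<CC>" for c
    using that assms uf_closed_ultrafilter by blast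
  show "p \<in> \<Inter>\<CC>" if "ultrafilter_on p" "\<And>A. A \<in> p \<Longrightarrow> \<exists>c\<in>\<Inter>\<CC>. A \<in> c" for p
    using that assms(2) uf_closedD by (metis InterD InterI)
qed

lemma uf_closed_Int: "uf_closed C \<Longrightarrow> uf_closed D \<Longrightarrow> uf_closed (C \<inter> D)"
  using uf_closed_Inter[of "{C, D}"] by auto

lemma uf_closed_chain_Inter_nonempty:
  assumes ne: "\<CC> \<noteq> {}" and closed: "\<And>C. C \<in> \<CC> \<Longrightarrow> uf_closed C"
    and nonempty: "\<And>C. C \<in> \<CC> \<Longrightarrow> C \<noteq> {}"
    and chain: "\<And>C D. C \<in> \<CC> \<Longrightarrow> D \<in> \<CC> \<Longrightarrow> C \<subseteq> D \<or> D \<subseteq> C"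
  shows "\<Inter>\<CC> \<noteq> {}"
proof -
  have uf: "ultrafilter_on c" if "C \<in> \<CC>" "c \<in> C" for C c
    using uf_closed_ultrafilter[OF closed[OF that(1)] that(2)] .
  have UNIV_mem: "UNIV \<in> \<Inter>C" if "C \<in> \<CC>" for C
    using uf[OF that] ultrafilter_UNIV by blast
  have empty_not_mem: "{} \<notin> \<Inter>C" if C: "C \<in> \<CC>" for C
  proof -
    obtain c where "c \<in> C" using nonempty[OF C] by blast
    then show ?thesis using uf[OF C] ultrafilter_empty by blast
  qed
  have Int_mem: "A \<inter> B \<in> \<Inter>C" if CAB: "C \<in> \<CC>" "A \<in> \<Inter>C" "B \<in> \<Inter>C" for C A B
  proof
    fix c assume "c \<in> C"
    then show "A \<inter> B \<in> c" using CAB uf[OF CAB(1)] ultrafilter_Int by blast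
  qed
  obtain p where p: "ultrafilter_on p" "(\<Union>C\<in>\<CC>. \<Inter>C) \<subseteq> p"
  proof (rule exE[OF ultrafilter_extend])
    obtain C where "C \<in> \<CC>" using ne by blast
    then show "(\<Union>C\<in>\<CC>. \<Inter>C) \<noteq> {}" using UNIV_mem by blast
    show "{} \<notin> (\<Union>C\<in>\<CC>. \<Inter>C)" using empty_not_mem by blast
  next
    fix A B assume "A \<in> (\<Union>C\<in>\<CC>. \<Inter>C)" "B \<in> (\<Union>C\<in>\<CC>. \<Inter>C)"
    then obtain C D where CD: "C \<in> \<CC>" "D \<in> \<CC>" "A \<in> \<Inter>C" "B \<in> \<Inter>D" by blast
    from chain[OF CD(1,2)] have "A \<inter> B \<in> \<Inter>C \<or> A \<inter> B \<in> \<Inter>D"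
    proof
      assume "C \<subseteq> D"
      then have "B \<in> \<Inter>C" using CD(4) by blast
      then show ?thesis using Int_mem[OF CD(1,3)] by blast
    next
      assume "D \<subseteq> C"
      then have "A \<in> \<Inter>D" using CD(3) by blast
      then show ?thesis using Int_mem[OF CD(2) _ CD(4)] by blast
    qed
    then show "\<exists>E\<in>(\<Union>C\<in>\<CC>. \<Inter>C). E \<subseteq> A \<inter> B" using CD(1,2) by blast
  qed blast
  have "p \<in> C" if C: "C \<in> \<CC>" for C
  proof (rule uf_closed_Inter_subset)
    show "uf_closed C" using closed[OF C] .
    show "\<Inter>C \<subseteq> p" using p(2) C by blast
  qed (rule p(1))
  then show ?thesis by blast
qed

text \<open>Compactness, in the form used for right translations.\<close>

lemma uf_closed_common_member:
  assumes C: "uf_closed C" and ne: "\<A> \<noteq> {}"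
    and down: "\<And>A B. A \<in> \<A> \<Longrightarrow> B \<in> \<A> \<Longrightarrow> \<exists>D\<in>\<A>. D \<subseteq> A \<inter> B"
    and hit: "\<And>A. A \<in> \<A> \<Longrightarrow> \<exists>c\<in>C. A \<in> c"
  shows "\<exists>c\<in>C. \<A> \<subseteq> c"
proof -
  have ufC: "\<And>c. c \<in> C \<Longrightarrow> ultrafilter_on c" using uf_closed_ultrafilter[OF C] .
  have Inter_Int: "F1 \<inter> F2 \<in> \<Inter>C" if F: "F1 \<in> \<Inter>C" "F2 \<in> \<Inter>C" for F1 F2
  proof
    fix c assume "c \<in> C"
    then show "F1 \<inter> F2 \<in> c" using F ultrafilter_Int[OF ufC] by blast
  qed
  have UNIV_mem: "UNIV \<in> \<Inter>C" using ufC ultrafilter_UNIV by blast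
  define \<B> where "\<B> = {F \<inter> A | F A. F \<in> \<Inter>C \<and> A \<in> \<A>}"
  obtain c0 where c0: "ultrafilter_on c0" "\<B> \<subseteq> c0"
  proof (rule exE[OF ultrafilter_extend])
    show "\<B> \<noteq> {}" unfolding \<B>_def using UNIV_mem ne by blast
  next
    show "{} \<notin> \<B>"
    proof
      assume "{} \<in> \<B>"
      then obtain F A where FA: "F \<inter> A = {}" "F \<in> \<Inter>C" "A \<in> \<A>" unfolding \<B>_def by blast
      obtain c where c: "c \<in> C" "A \<in> c" using hit[OF FA(3)] by blast
      then have "F \<inter> A \<in> c" using FA(2) ultrafilter_Int[OF ufC[OF c(1)]] by blast
      then show False using FA(1) ultrafilter_empty[OF ufC[OF c(1)]] by simp
    qed
  next
    fix X Y assume "X \<in> \<B>" "Y \<in> \<B>"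
    then obtain F1 A1 F2 A2 where FA: "X = F1 \<inter> A1" "Y = F2 \<inter> A2"
      "F1 \<in> \<Inter>C" "F2 \<in> \<Inter>C" "A1 \<in> \<A>" "A2 \<in> \<A>" unfolding \<B>_def by blast
    obtain D where D: "D \<in> \<A>" "D \<subseteq> A1 \<inter> A2" using down[OF FA(5,6)] by blast
    have "(F1 \<inter> F2) \<inter> D \<in> \<B>" unfolding \<B>_def using Inter_Int[OF FA(3,4)] D(1) by blast
    moreover have "(F1 \<inter> F2) \<inter> D \<subseteq> X \<inter> Y" unfolding FA(1,2) using D(2) by blast
    ultimately show "\<exists>Z\<in>\<B>. Z \<subseteq> X \<inter> Y" by blast
  qed blast
  have "\<Inter>C \<subseteq> c0"
  proof
    fix F assume "F \<in> \<Inter>C"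
    obtain A where "A \<in> \<A>" using ne by blast
    then have "F \<inter> A \<in> c0" using c0(2) \<open>F \<in> \<Inter>C\<close> unfolding \<B>_def by blast
    then show "F \<in> c0" using ultrafilter_Int_iff[OF c0(1)] by blast
  qed
  then have "c0 \<in> C" using uf_closed_Inter_subset[OF C c0(1)] by blast
  moreover have "\<A> \<subseteq> c0"
  proof
    fix A assume "A \<in> \<A>"
    then have "UNIV \<inter> A \<in> \<B>" unfolding \<B>_def using UNIV_mem by blast
    then show "A \<in> c0" using c0(2) by auto
  qed
  ultimately show ?thesis by blast
qed

lemma Zorn_minimal_chain_Inter:
  assumes P0: "P C0"
    and chain: "\<And>\<CC>. \<CC> \<noteq> {} \<Longrightarrow> (\<And>C. C \<in> \<CC> \<Longrightarrow> P C) \<Longrightarrow>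
       (\<And>C D. C \<in> \<CC> \<Longrightarrow> D \<in> \<CC> \<Longrightarrow> C \<subseteq> D \<or> D \<subseteq> C) \<Longrightarrow> P (\<Inter>\<CC>)"
  shows "\<exists>M. P M \<and> M \<subseteq> C0 \<and> (\<forall>C. P C \<and> C \<subseteq> M \<longrightarrow> C = M)"
proof -
  define \<S> where "\<S> = {C. P C \<and> C \<subseteq> C0}"
  have "\<exists>N\<in>uminus ` \<S>. \<forall>X\<in>uminus ` \<S>. N \<subseteq> X \<longrightarrow> X = N"
  proof (rule subset_Zorn_nonempty)
    show "uminus ` \<S> \<noteq> {}" using P0 unfolding \<S>_def by blast
  next
    fix \<CC> assume ne: "\<CC> \<noteq> {}" and ch: "subset.chain (uminus ` \<S>) \<CC>"
    have D: "uminus ` \<CC> \<subseteq> \<S>" using ch unfolding subset_chain_def by auto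
    have "P (\<Inter>(uminus ` \<CC>))"
    proof (rule chain)
      show "uminus ` \<CC> \<noteq> {}" using ne by blast
      show "P C" if "C \<in> uminus ` \<CC>" for C using that D unfolding \<S>_def by blast
      fix C D assume "C \<in> uminus ` \<CC>" "D \<in> uminus ` \<CC>"
      then obtain X Y where XY: "X \<in> \<CC>" "Y \<in> \<CC>" "C = - X" "D = - Y" by blast
      have "X \<subseteq> Y \<or> Y \<subseteq> X" using ch XY(1,2) unfolding subset_chain_def by simp
      then show "C \<subseteq> D \<or> D \<subseteq> C" unfolding XY(3,4) by auto
    qed
    moreover have "\<Inter>(uminus ` \<CC>) \<subseteq> C0" using ne D unfolding \<S>_def by blast
    ultimately have "\<Inter>(uminus ` \<CC>) \<in> \<S>" unfolding \<S>_def by blast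
    moreover have "\<Union>\<CC> = - \<Inter>(uminus ` \<CC>)" by auto
    ultimately show "\<Union>\<CC> \<in> uminus ` \<S>" by blast
  qed
  then obtain N where N: "N \<in> uminus ` \<S>" and max: "\<forall>X\<in>uminus ` \<S>. N \<subseteq> X \<longrightarrow> X = N"
    by blast
  then obtain M where M: "M \<in> \<S>" and NM: "N = - M" by blast
  have "C = M" if "P C" "C \<subseteq> M" for C
  proof -
    have "- C \<in> uminus ` \<S>" using that M unfolding \<S>_def by blast
    moreover have "N \<subseteq> - C" using that(2) unfolding NM by blast
    ultimately have "- C = - M" using max unfolding NM by blast
    then show ?thesis by simp
  qed
  then show ?thesis using M unfolding \<S>_def by blast
qed

section \<open>The semigroup \<delta>S\<close>

lemma psemigroup_Some_assoc:
  assumes "psemigroup op" "op x y = Some u"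
  shows "op u z = Option.bind (op y z) (op x)"
  using assms unfolding psemigroup_def by (metis bind.simps(2))

lemma mem_phi: "t \<in> phi op s \<longleftrightarrow> op s t \<noteq> None"
  by (simp add: phi_def)

lemma mem_sinv: "t \<in> sinv op s A \<longleftrightarrow> op s t \<noteq> None \<and> the (op s t) \<in> A"
  by (simp add: sinv_def phi_def)

lemma mem_sigma: "t \<in> sigma op W \<longleftrightarrow> (\<forall>w\<in>W. op w t \<noteq> None)"
  by (simp add: sigma_def phi_def)

lemma sinv_sinv:
  assumes "psemigroup op" "op x y = Some u"
  shows "sinv op y (sinv op x A) = sinv op u A"
  using psemigroup_Some_assoc[OF assms] by (auto simp: mem_sinv split: bind_split_asm)

lemma sinv_Int: "sinv op s (A \<inter> B) = sinv op s A \<inter> sinv op s B"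
  and sinv_mono: "A \<subseteq> B \<Longrightarrow> sinv op s A \<subseteq> sinv op s B"
  and sinv_UNIV: "sinv op s UNIV = phi op s"
  and sinv_empty: "sinv op s {} = {}"
  and sinv_Compl: "sinv op s (- A) = phi op s - sinv op s A"
  by (auto simp: sinv_def)

lemma mem_ustar: "A \<in> ustar op p q \<longleftrightarrow> {s. sinv op s A \<in> q} \<in> p"
  by (simp add: ustar_def)

lemma deltaS_ultrafilter: "p \<in> deltaS op \<Longrightarrow> ultrafilter_on p"
  and deltaS_phi: "p \<in> deltaS op \<Longrightarrow> phi op x \<in> p"
  and deltaSI: "ultrafilter_on p \<Longrightarrow> (\<And>x. phi op x \<in> p) \<Longrightarrow> p \<in> deltaS op"
  by (simp_all add: deltaS_def betaS_def)

lemma sigma_in_deltaS: "r \<in> deltaS op \<Longrightarrow> finite W \<Longrightarrow> sigma op W \<in> r"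
  unfolding sigma_def by (simp add: deltaS_phi deltaS_ultrafilter ultrafilter_INT)

lemma ustar_preimage_Int:
  assumes "ultrafilter_on q"
  shows "{s. sinv op s (A \<inter> B) \<in> q} = {s. sinv op s A \<in> q} \<inter> {s. sinv op s B \<in> q}"
  using ultrafilter_Int_iff[OF assms] by (auto simp: sinv_Int)

lemma ustar_preimage_UNIV: "q \<in> deltaS op \<Longrightarrow> {s. sinv op s UNIV \<in> q} = UNIV"
  by (simp add: sinv_UNIV deltaS_phi)

lemma ultrafilter_ustar:
  assumes p: "ultrafilter_on p" and q: "q \<in> deltaS op"
  shows "ultrafilter_on (ustar op p q)"
proof -
  have uq: "ultrafilter_on q" using q by (rule deltaS_ultrafilter)
  have Compl: "{s. sinv op s (- A) \<in> q} = - {s. sinv op s A \<in> q}" for A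
  proof -
    have "sinv op s (- A) \<in> q \<longleftrightarrow> - sinv op s A \<in> q" for s
      using ultrafilter_cong_on[OF uq deltaS_phi[OF q], of "sinv op s (- A)" s "- sinv op s A"]
      by (auto simp: sinv_Compl)
    then show ?thesis using ultrafilter_Compl_iff[OF uq] by auto
  qed
  show ?thesis
    unfolding ultrafilter_on_def mem_ustar
  proof (intro conjI allI impI)
    show "{s. sinv op s UNIV \<in> q} \<in> p" using ustar_preimage_UNIV[OF q] ultrafilter_UNIV[OF p] by simp
    show "{s. sinv op s {} \<in> q} \<notin> p"
      using ultrafilter_empty[OF uq] ultrafilter_empty[OF p] by (simp add: sinv_empty)
  next
    fix A B assume "{s. sinv op s A \<in> q} \<in> p \<and> A \<subseteq> B"
    moreover have "{s. sinv op s A \<in> q} \<subseteq> {s. sinv op s B \<in> q}" if "A \<subseteq> B"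
      using sinv_mono[OF that] ultrafilter_mono[OF uq] by blast
    ultimately show "{s. sinv op s B \<in> q} \<in> p" using ultrafilter_mono[OF p] by blast
  next
    fix A B assume "{s. sinv op s A \<in> q} \<in> p \<and> {s. sinv op s B \<in> q} \<in> p"
    then show "{s. sinv op s (A \<inter> B) \<in> q} \<in> p"
      unfolding ustar_preimage_Int[OF uq] using ultrafilter_Int[OF p] by blast
  next
    fix A show "{s. sinv op s A \<in> q} \<in> p \<or> {s. sinv op s (- A) \<in> q} \<in> p"
      unfolding Compl using ultrafilter_Compl_iff[OF p] by blast
  qed
qed

lemma ustar_deltaS:
  assumes ps: "psemigroup op" and p: "p \<in> deltaS op" and q: "q \<in> deltaS op"
  shows "ustar op p q \<in> deltaS op"
proof (rule deltaSI)
  show "ultrafilter_on (ustar op p q)"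
    using ultrafilter_ustar[OF deltaS_ultrafilter[OF p] q] .
  fix x
  have "phi op x \<subseteq> {s. sinv op s (phi op x) \<in> q}"
  proof
    fix s assume "s \<in> phi op x"
    then obtain u where u: "op x s = Some u" by (auto simp: mem_phi)
    have "sinv op s (phi op x) = phi op u"
      using sinv_sinv[OF ps u, of UNIV] unfolding sinv_UNIV .
    then show "s \<in> {s. sinv op s (phi op x) \<in> q}" using deltaS_phi[OF q] by simp
  qed
  then show "phi op x \<in> ustar op p q"
    unfolding mem_ustar by (rule ultrafilter_mono[OF deltaS_ultrafilter[OF p] deltaS_phi[OF p]])
qed

lemma ustar_assoc:
  assumes ps: "psemigroup op" and q: "q \<in> deltaS op"
  shows "ustar op (ustar op p q) r = ustar op p (ustar op q r)"
proof (rule set_eqI)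
  fix A
  have "sinv op x {s. sinv op s A \<in> r} \<in> q \<longleftrightarrow> {y. sinv op y (sinv op x A) \<in> r} \<in> q" for x
  proof (rule ultrafilter_cong_on[OF deltaS_ultrafilter[OF q] deltaS_phi[OF q]])
    show "sinv op x {s. sinv op s A \<in> r} \<inter> phi op x = {y. sinv op y (sinv op x A) \<in> r} \<inter> phi op x"
    proof (rule set_eqI)
      fix y
      show "y \<in> sinv op x {s. sinv op s A \<in> r} \<inter> phi op x \<longleftrightarrow> y \<in> {y. sinv op y (sinv op x A) \<in> r} \<inter> phi op x"
      proof (cases "op x y")
        case (Some u)
        then show ?thesis by (simp add: mem_sinv mem_phi sinv_sinv[OF ps Some])
      qed (simp add: mem_phi)
    qed
  qed
  then show "A \<in> ustar op (ustar op p q) r \<longleftrightarrow> A \<in> ustar op p (ustar op q r)"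
    unfolding mem_ustar by simp
qed

lemma uf_closed_deltaS: "uf_closed (deltaS op)"
proof (rule uf_closedI)
  show "ultrafilter_on c" if "c \<in> deltaS op" for c using that by (rule deltaS_ultrafilter)
  fix p assume p: "ultrafilter_on p" and near: "\<And>A. A \<in> p \<Longrightarrow> \<exists>c\<in>deltaS op. A \<in> c"
  show "p \<in> deltaS op"
  proof (rule deltaSI[OF p], rule ccontr)
    fix x assume "phi op x \<notin> p"
    then have "- phi op x \<in> p" using ultrafilter_Compl_iff[OF p] by simp
    then obtain c where c: "c \<in> deltaS op" "- phi op x \<in> c" using near by blast
    have "phi op x \<in> c" using deltaS_phi[OF c(1)] .
    then show False using c(2) ultrafilter_Compl_iff[OF deltaS_ultrafilter[OF c(1)]] by simp
  qed
qed

lemma deltaS_nonempty: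
  assumes "adequate op" shows "deltaS op \<noteq> {}"
proof -
  define \<B> where "\<B> = {sigma op H | H. finite H \<and> H \<noteq> {}}"
  obtain p where p: "ultrafilter_on p" "\<B> \<subseteq> p"
  proof (rule exE[OF ultrafilter_extend])
    show "\<B> \<noteq> {}" unfolding \<B>_def by blast
    show "{} \<notin> \<B>" using assms unfolding \<B>_def adequate_def by (auto simp del: sigma_def)
  next
    fix A B assume "A \<in> \<B>" "B \<in> \<B>"
    then obtain H1 H2 where H: "A = sigma op H1" "B = sigma op H2"
      "finite H1" "H1 \<noteq> {}" "finite H2" "H2 \<noteq> {}"
      unfolding \<B>_def by blast
    have "sigma op (H1 \<union> H2) = A \<inter> B" unfolding H(1,2) sigma_def by blast
    moreover have "sigma op (H1 \<union> H2) \<in> \<B>" unfolding \<B>_def using H(3-6) by blast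
    ultimately show "\<exists>C\<in>\<B>. C \<subseteq> A \<inter> B" by blast
  qed blast
  have "phi op x \<in> p" for x
  proof -
    have "sigma op {x} \<in> \<B>" unfolding \<B>_def by blast
    then have "sigma op {x} \<in> p" using p(2) by blast
    then show ?thesis by (simp add: sigma_def)
  qed
  then show ?thesis using deltaSI[OF p(1)] by blast
qed

lemma uf_closed_right_image:
  assumes q: "q \<in> deltaS op" and C: "uf_closed C"
  shows "uf_closed ((\<lambda>c. ustar op c q) ` C)"
proof (rule uf_closedI)
  show "ultrafilter_on x" if "x \<in> (\<lambda>c. ustar op c q) ` C" for x
    using that ultrafilter_ustar[OF uf_closed_ultrafilter[OF C] q] by (auto simp del: ustar_def)
  fix p assume p: "ultrafilter_on p" and near: "\<And>A. A \<in> p \<Longrightarrow> \<exists>x\<in>(\<lambda>c. ustar op c q) ` C. A \<in> x"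
  let ?E = "\<lambda>A. {s. sinv op s A \<in> q}"
  have "\<exists>c\<in>C. ?E ` p \<subseteq> c"
  proof (rule uf_closed_common_member[OF C])
    show "?E ` p \<noteq> {}" using ultrafilter_UNIV[OF p] by blast
  next
    fix X Y assume "X \<in> ?E ` p" "Y \<in> ?E ` p"
    then obtain A B where AB: "A \<in> p" "B \<in> p" "X = ?E A" "Y = ?E B" by blast
    have "?E (A \<inter> B) \<in> ?E ` p" using ultrafilter_Int[OF p AB(1,2)] by blast
    moreover have "?E (A \<inter> B) = X \<inter> Y"
      unfolding AB(3,4) using ustar_preimage_Int[OF deltaS_ultrafilter[OF q]] .
    ultimately show "\<exists>D\<in>?E ` p. D \<subseteq> X \<inter> Y" by blast
  next
    fix X assume "X \<in> ?E ` p"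
    then obtain A where A: "A \<in> p" "X = ?E A" by blast
    obtain c where "c \<in> C" "A \<in> ustar op c q" using near[OF A(1)] by blast
    then show "\<exists>c\<in>C. X \<in> c" unfolding A(2) mem_ustar by blast
  qed
  then obtain c0 where c0: "c0 \<in> C" "?E ` p \<subseteq> c0" by blast
  have "p \<subseteq> ustar op c0 q"
  proof
    fix A assume "A \<in> p"
    then have "?E A \<in> c0" using c0(2) by blast
    then show "A \<in> ustar op c0 q" by (simp only: mem_ustar)
  qed
  then have "p = ustar op c0 q"
    by (rule ultrafilter_subset_eq[OF p ultrafilter_ustar[OF uf_closed_ultrafilter[OF C c0(1)] q]])
  then show "p \<in> (\<lambda>c. ustar op c q) ` C" using c0(1) by blast
qed

lemma uf_closed_right_fiber:
  assumes q: "q \<in> deltaS op" and C: "uf_closed C" and r: "ultrafilter_on r"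
  shows "uf_closed {c\<in>C. ustar op c q = r}"
proof (rule uf_closedI)
  show "ultrafilter_on c" if "c \<in> {c\<in>C. ustar op c q = r}" for c
    using that uf_closed_ultrafilter[OF C] by blast
  fix p assume p: "ultrafilter_on p" and near: "\<And>A. A \<in> p \<Longrightarrow> \<exists>c\<in>{c\<in>C. ustar op c q = r}. A \<in> c"
  have "p \<in> C" using uf_closedD[OF C p] near by blast
  moreover have "ustar op p q \<subseteq> r"
  proof
    fix B assume "B \<in> ustar op p q"
    then obtain c where c: "c \<in> C" "ustar op c q = r" "{s. sinv op s B \<in> q} \<in> c"
      using near unfolding mem_ustar by blast
    have "B \<in> ustar op c q" using c(3) by (simp only: mem_ustar)
    then show "B \<in> r" using c(2) by simp
  qed
  then have "ustar op p q = r" by (rule ultrafilter_subset_eq[OF ultrafilter_ustar[OF p q] r])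
  ultimately show "p \<in> {c\<in>C. ustar op c q = r}" by blast
qed

section \<open>Idempotents and the smallest ideal\<close>

definition closed_subsemigroup :: "'a pop \<Rightarrow> 'a set set set \<Rightarrow> bool" where
  "closed_subsemigroup op X \<longleftrightarrow> uf_closed X \<and> X \<noteq> {} \<and> X \<subseteq> deltaS op \<and>
     (\<forall>x\<in>X. \<forall>y\<in>X. ustar op x y \<in> X)"

lemma closed_subsemigroupD:
  assumes "closed_subsemigroup op X"
  shows "uf_closed X" "X \<noteq> {}" "X \<subseteq> deltaS op" "x \<in> X \<Longrightarrow> y \<in> X \<Longrightarrow> ustar op x y \<in> X"
  using assms unfolding closed_subsemigroup_def by blast+

lemma closed_subsemigroup_minimal:
  assumes "closed_subsemigroup op X"
  shows "\<exists>M. closed_subsemigroup op M \<and> M \<subseteq> X \<and> (\<forall>N. closed_subsemigroup op N \<and> N \<subseteq> M \<longrightarrow> N = M)"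
proof (rule Zorn_minimal_chain_Inter[where P = "closed_subsemigroup op", OF assms])
  fix \<CC> assume ne: "\<CC> \<noteq> {}" and S: "\<And>C. C \<in> \<CC> \<Longrightarrow> closed_subsemigroup op C"
    and chain: "\<And>C D. C \<in> \<CC> \<Longrightarrow> D \<in> \<CC> \<Longrightarrow> C \<subseteq> D \<or> D \<subseteq> C"
  have "uf_closed (\<Inter>\<CC>)" using uf_closed_Inter[OF ne] closed_subsemigroupD(1)[OF S] by blast
  moreover have "\<Inter>\<CC> \<noteq> {}"
    using uf_closed_chain_Inter_nonempty[OF ne _ _ chain] closed_subsemigroupD(1,2)[OF S] by blast
  moreover obtain C where "C \<in> \<CC>" using ne by blast
  then have "\<Inter>\<CC> \<subseteq> deltaS op" using closed_subsemigroupD(3)[OF S] by blast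
  moreover have "ustar op x y \<in> \<Inter>\<CC>" if "x \<in> \<Inter>\<CC>" "y \<in> \<Inter>\<CC>" for x y
    using that closed_subsemigroupD(4)[OF S] by blast
  ultimately show "closed_subsemigroup op (\<Inter>\<CC>)" unfolding closed_subsemigroup_def by blast
qed

text \<open>Ellis--Numakura: for \<open>x\<close> in a minimal closed subsemigroup \<open>M\<close>, both \<open>M x\<close> and
  \<open>{c \<in> M. c x = x}\<close> are closed subsemigroups inside \<open>M\<close>, hence equal to \<open>M\<close>.\<close>

lemma minimal_closed_subsemigroup_idempotent:
  assumes ps: "psemigroup op" and M: "closed_subsemigroup op M"
    and min: "\<And>N. closed_subsemigroup op N \<Longrightarrow> N \<subseteq> M \<Longrightarrow> N = M" and x: "x \<in> M"
  shows "ustar op x x = x"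
proof -
  note Mc = closed_subsemigroupD(1)[OF M] and Md = closed_subsemigroupD(3)[OF M]
    and Mmult = closed_subsemigroupD(4)[OF M]
  have xd: "x \<in> deltaS op" using x Md by blast
  have "closed_subsemigroup op ((\<lambda>c. ustar op c x) ` M)"
    unfolding closed_subsemigroup_def
  proof (intro conjI ballI)
    show "uf_closed ((\<lambda>c. ustar op c x) ` M)" using uf_closed_right_image[OF xd Mc] .
    show "(\<lambda>c. ustar op c x) ` M \<noteq> {}" using x by blast
    show "(\<lambda>c. ustar op c x) ` M \<subseteq> deltaS op" using Mmult x Md by blast
    fix a b assume "a \<in> (\<lambda>c. ustar op c x) ` M" "b \<in> (\<lambda>c. ustar op c x) ` M"
    then obtain a' b' where ab: "a' \<in> M" "b' \<in> M" "a = ustar op a' x" "b = ustar op b' x" by blast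
    have "b' \<in> deltaS op" using ab(2) Md by blast
    then have "ustar op a b = ustar op (ustar op (ustar op a' x) b') x"
      unfolding ab(3,4) by (rule ustar_assoc[OF ps, symmetric])
    then show "ustar op a b \<in> (\<lambda>c. ustar op c x) ` M" using Mmult ab x by blast
  qed
  then have "(\<lambda>c. ustar op c x) ` M = M" using min Mmult x by blast
  then obtain y where yM: "y \<in> M" and yx: "ustar op y x = x" using x by (metis imageE)
  define N where "N = {c\<in>M. ustar op c x = x}"
  have "closed_subsemigroup op N"
    unfolding closed_subsemigroup_def
  proof (intro conjI ballI)
    show "uf_closed N"
      unfolding N_def using uf_closed_right_fiber[OF xd Mc deltaS_ultrafilter[OF xd]] .
    show "N \<noteq> {}" "N \<subseteq> deltaS op" unfolding N_def using yM yx Md by blast+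
    fix a b assume ab: "a \<in> N" "b \<in> N"
    then have "b \<in> deltaS op" unfolding N_def using Md by blast
    then have "ustar op (ustar op a b) x = ustar op a (ustar op b x)" by (rule ustar_assoc[OF ps])
    also have "\<dots> = x" using ab unfolding N_def by simp
    finally show "ustar op a b \<in> N" using ab Mmult unfolding N_def by blast
  qed
  then have "N = M" using min unfolding N_def by blast
  then show ?thesis using x unfolding N_def by blast
qed

lemma closed_subsemigroup_idempotent:
  assumes "psemigroup op" "closed_subsemigroup op X"
  shows "\<exists>e\<in>X. ustar op e e = e"
proof -
  obtain M where M: "closed_subsemigroup op M" "M \<subseteq> X"
    and min: "\<forall>N. closed_subsemigroup op N \<and> N \<subseteq> M \<longrightarrow> N = M"
    using closed_subsemigroup_minimal[OF assms(2)] by (elim exE conjE)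
  obtain x where "x \<in> M" using closed_subsemigroupD(2)[OF M(1)] by blast
  then show ?thesis using minimal_closed_subsemigroup_idempotent[OF assms(1) M(1) _ \<open>x \<in> M\<close>] min M(2) by blast
qed

definition closed_left_ideal :: "'a pop \<Rightarrow> 'a set set set \<Rightarrow> bool" where
  "closed_left_ideal op L \<longleftrightarrow> uf_closed L \<and> L \<noteq> {} \<and> L \<subseteq> deltaS op \<and>
     (\<forall>p\<in>deltaS op. \<forall>x\<in>L. ustar op p x \<in> L)"

lemma closed_left_idealD:
  assumes "closed_left_ideal op L"
  shows "uf_closed L" "L \<noteq> {}" "L \<subseteq> deltaS op" "p \<in> deltaS op \<Longrightarrow> x \<in> L \<Longrightarrow> ustar op p x \<in> L"
  using assms unfolding closed_left_ideal_def by blast+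

lemma closed_left_ideal_principal:
  assumes ps: "psemigroup op" and ne: "deltaS op \<noteq> {}" and x: "x \<in> deltaS op"
  shows "closed_left_ideal op ((\<lambda>c. ustar op c x) ` deltaS op)"
  unfolding closed_left_ideal_def
proof (intro conjI ballI)
  show "uf_closed ((\<lambda>c. ustar op c x) ` deltaS op)"
    using uf_closed_right_image[OF x uf_closed_deltaS] .
  show "(\<lambda>c. ustar op c x) ` deltaS op \<noteq> {}" using ne by blast
  show "(\<lambda>c. ustar op c x) ` deltaS op \<subseteq> deltaS op" using ustar_deltaS[OF ps _ x] by blast
  fix p y assume p: "p \<in> deltaS op" and "y \<in> (\<lambda>c. ustar op c x) ` deltaS op"
  then obtain c where c: "c \<in> deltaS op" "y = ustar op c x" by blast
  then have "ustar op p y = ustar op (ustar op p c) x" using ustar_assoc[OF ps c(1)] by simp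
  then show "ustar op p y \<in> (\<lambda>c. ustar op c x) ` deltaS op" using ustar_deltaS[OF ps p c(1)] by blast
qed

lemma minimal_left_ideal_exists:
  assumes ps: "psemigroup op" and ad: "adequate op"
  shows "\<exists>L. closed_left_ideal op L \<and> (\<forall>x\<in>L. (\<lambda>c. ustar op c x) ` deltaS op = L)"
proof -
  have ne: "deltaS op \<noteq> {}" using deltaS_nonempty[OF ad] .
  have "\<exists>L. closed_left_ideal op L \<and> L \<subseteq> deltaS op \<and>
      (\<forall>C. closed_left_ideal op C \<and> C \<subseteq> L \<longrightarrow> C = L)"
  proof (rule Zorn_minimal_chain_Inter)
    show "closed_left_ideal op (deltaS op)"
      unfolding closed_left_ideal_def using uf_closed_deltaS ne ustar_deltaS[OF ps] by blast
    fix \<CC> assume ne: "\<CC> \<noteq> {}" and L: "\<And>C. C \<in> \<CC> \<Longrightarrow> closed_left_ideal op C"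
      and chain: "\<And>C D. C \<in> \<CC> \<Longrightarrow> D \<in> \<CC> \<Longrightarrow> C \<subseteq> D \<or> D \<subseteq> C"
    have "uf_closed (\<Inter>\<CC>)" using uf_closed_Inter[OF ne] L unfolding closed_left_ideal_def by blast
    moreover have "\<Inter>\<CC> \<noteq> {}"
      using uf_closed_chain_Inter_nonempty[OF ne _ _ chain] L unfolding closed_left_ideal_def by blast
    moreover obtain C where "C \<in> \<CC>" using ne by blast
    then have "\<Inter>\<CC> \<subseteq> deltaS op" using L unfolding closed_left_ideal_def by blast
    moreover have "ustar op p x \<in> \<Inter>\<CC>" if "p \<in> deltaS op" "x \<in> \<Inter>\<CC>" for p x
      using that L unfolding closed_left_ideal_def by blast
    ultimately show "closed_left_ideal op (\<Inter>\<CC>)" unfolding closed_left_ideal_def by blast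
  qed
  then obtain L where L: "closed_left_ideal op L"
    and minL: "\<And>C. closed_left_ideal op C \<Longrightarrow> C \<subseteq> L \<Longrightarrow> C = L" by blast
  have "(\<lambda>c. ustar op c x) ` deltaS op = L" if x: "x \<in> L" for x
  proof (rule minL)
    have xd: "x \<in> deltaS op" using x L unfolding closed_left_ideal_def by blast
    show "closed_left_ideal op ((\<lambda>c. ustar op c x) ` deltaS op)"
      using closed_left_ideal_principal[OF ps ne xd] .
    show "(\<lambda>c. ustar op c x) ` deltaS op \<subseteq> L" using x L unfolding closed_left_ideal_def by blast
  qed
  then show ?thesis using L by blast
qed

lemma left_ideal_times_deltaS_ideal:
  assumes ps: "psemigroup op" and L: "closed_left_ideal op L"
  shows "is_ideal op {ustar op l s | l s. l \<in> L \<and> s \<in> deltaS op}" (is "is_ideal op ?K")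
  unfolding is_ideal_def
proof (intro conjI ballI)
  note LD = closed_left_idealD(3)[OF L]
  obtain l where "l \<in> L" using closed_left_idealD(2)[OF L] by blast
  then have "ustar op l l \<in> ?K" using LD by blast
  then show "?K \<noteq> {}" by blast
  show "?K \<subseteq> deltaS op"
  proof
    fix q assume "q \<in> ?K"
    then obtain l s where "l \<in> L" "s \<in> deltaS op" "q = ustar op l s" by blast
    then show "q \<in> deltaS op" using ustar_deltaS[OF ps] LD by blast
  qed
  fix p q assume p: "p \<in> deltaS op" and "q \<in> ?K"
  then obtain l s where ls: "l \<in> L" "s \<in> deltaS op" "q = ustar op l s" by blast
  have "l \<in> deltaS op" using ls(1) LD by blast
  then have "ustar op p q = ustar op (ustar op p l) s" unfolding ls(3) by (rule ustar_assoc[OF ps, symmetric])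
  then show "ustar op p q \<in> ?K" using closed_left_idealD(4)[OF L p ls(1)] ls(2) by blast
  have "ustar op q p = ustar op l (ustar op s p)" unfolding ls(3) by (rule ustar_assoc[OF ps ls(2)])
  then show "ustar op q p \<in> ?K" using ls(1) ustar_deltaS[OF ps ls(2) p] by blast
qed

text \<open>An ideal \<open>J\<close> meets a minimal left ideal \<open>L\<close> in some \<open>j l\<close>, which generates \<open>L\<close>.\<close>

lemma minimal_left_ideal_subset_ideal:
  assumes L: "closed_left_ideal op L" and gen: "\<forall>x\<in>L. (\<lambda>c. ustar op c x) ` deltaS op = L"
    and J: "is_ideal op J"
  shows "L \<subseteq> J"
proof
  have JD: "J \<subseteq> deltaS op" and Jideal: "\<And>p q. p \<in> deltaS op \<Longrightarrow> q \<in> J \<Longrightarrow> ustar op p q \<in> J \<and> ustar op q p \<in> J"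
    using J unfolding is_ideal_def by blast+
  obtain j where j: "j \<in> J" using J unfolding is_ideal_def by blast
  obtain l where l: "l \<in> L" using closed_left_idealD(2)[OF L] by blast
  have jl: "ustar op j l \<in> J" "ustar op j l \<in> L"
    using Jideal[OF subsetD[OF closed_left_idealD(3)[OF L] l] j] closed_left_idealD(4)[OF L subsetD[OF JD j] l]
    by blast+
  fix y assume "y \<in> L"
  then obtain c where "c \<in> deltaS op" "y = ustar op c (ustar op j l)" using gen jl(2) by blast
  then show "y \<in> J" using Jideal jl(1) by blast
qed

lemma smallest_ideal_exists:
  assumes ps: "psemigroup op" and ad: "adequate op"
  shows "\<exists>K. is_ideal op K \<and> (\<forall>J. is_ideal op J \<longrightarrow> K \<subseteq> J)"
proof -
  obtain L where L: "closed_left_ideal op L" and gen: "\<forall>x\<in>L. (\<lambda>c. ustar op c x) ` deltaS op = L"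
    using minimal_left_ideal_exists[OF ps ad] by (elim exE conjE)
  have "{ustar op l s | l s. l \<in> L \<and> s \<in> deltaS op} \<subseteq> J" if J: "is_ideal op J" for J
    using minimal_left_ideal_subset_ideal[OF L gen J] J unfolding is_ideal_def by blast
  then show ?thesis using left_ideal_times_deltaS_ideal[OF ps L] by blast
qed

lemma Kmin_smallest_ideal:
  assumes "psemigroup op" "adequate op"
  shows "is_ideal op (Kmin op)" "is_ideal op J \<Longrightarrow> Kmin op \<subseteq> J"
proof -
  obtain K where K: "is_ideal op K" "\<forall>J. is_ideal op J \<longrightarrow> K \<subseteq> J"
    using smallest_ideal_exists[OF assms] by blast
  have "Kmin op = K" unfolding Kmin_def
    by (rule the_equality) (use K in blast)+
  then show "is_ideal op (Kmin op)" "is_ideal op J \<Longrightarrow> Kmin op \<subseteq> J" using K by simp_all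
qed

section \<open>Homomorphisms\<close>

lemma htilde_ustar:
  assumes hom: "phom opS opT h" and q: "q \<in> deltaS opS"
  shows "htilde h (ustar opS p q) = ustar opT (htilde h p) (htilde h q)"
proof (rule set_eqI)
  fix B
  have "sinv opS s (h -` B) \<in> q \<longleftrightarrow> h -` sinv opT (h s) B \<in> q" for s
  proof (rule ultrafilter_cong_on[OF deltaS_ultrafilter[OF q] deltaS_phi[OF q]])
    show "sinv opS s (h -` B) \<inter> phi opS s = h -` sinv opT (h s) B \<inter> phi opS s"
    proof (rule set_eqI)
      fix t
      show "t \<in> sinv opS s (h -` B) \<inter> phi opS s \<longleftrightarrow> t \<in> h -` sinv opT (h s) B \<inter> phi opS s"
      proof (cases "opS s t")
        case (Some v)
        then have "opT (h s) (h t) = Some (h v)"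
          using hom unfolding phom_def by (metis mem_phi option.distinct(1) option.map(2))
        then show ?thesis using Some by (simp add: mem_phi mem_sinv)
      qed (simp add: mem_phi)
    qed
  qed
  then show "B \<in> htilde h (ustar opS p q) \<longleftrightarrow> B \<in> ustar opT (htilde h p) (htilde h q)"
    unfolding htilde_def mem_ustar by (simp add: vimage_def)
qed

text \<open>Since \<open>h\<close> maps \<open>\<delta>S\<close> onto \<open>\<delta>T\<close>, the preimage of \<open>K(\<delta>T)\<close> is an ideal of \<open>\<delta>S\<close>,
  hence contains \<open>K(\<delta>S)\<close>.\<close>

lemma central_of_central_preimage:
  assumes psS: "psemigroup opS" and adS: "adequate opS" and psT: "psemigroup opT" and adT: "adequate opT"
    and hom: "phom opS opT h" and onto: "htilde h ` deltaS opS = deltaS opT"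
    and central: "central opS (h -` A)"
  shows "central opT A"
proof -
  obtain q where qK: "q \<in> Kmin opS" and qq: "ustar opS q q = q" and qA: "h -` A \<in> q"
    using central unfolding central_def by blast
  have KT: "is_ideal opT (Kmin opT)" using Kmin_smallest_ideal(1)[OF psT adT] .
  have hD: "htilde h p \<in> deltaS opT" if "p \<in> deltaS opS" for p using that onto by blast
  define I where "I = {x\<in>deltaS opS. htilde h x \<in> Kmin opT}"
  have "is_ideal opS I"
    unfolding is_ideal_def
  proof (intro conjI ballI)
    obtain t where t: "t \<in> Kmin opT" using KT unfolding is_ideal_def by blast
    then have "t \<in> htilde h ` deltaS opS" using KT onto unfolding is_ideal_def by blast
    then show "I \<noteq> {}" unfolding I_def using t by auto
    show "I \<subseteq> deltaS opS" unfolding I_def by blast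
  next
    fix p x assume p: "p \<in> deltaS opS" and x: "x \<in> I"
    have xd: "x \<in> deltaS opS" and xK: "htilde h x \<in> Kmin opT" using x unfolding I_def by blast+
    have "ustar opT (htilde h p) (htilde h x) \<in> Kmin opT" "ustar opT (htilde h x) (htilde h p) \<in> Kmin opT"
      using KT hD[OF p] xK unfolding is_ideal_def by blast+
    then show "ustar opS p x \<in> I" "ustar opS x p \<in> I"
      unfolding I_def using ustar_deltaS[OF psS] htilde_ustar[OF hom] p xd by simp_all
  qed
  then have "q \<in> I" using Kmin_smallest_ideal(2)[OF psS adS] qK by blast
  then have qd: "q \<in> deltaS opS" and hK: "htilde h q \<in> Kmin opT" unfolding I_def by blast+
  have "ustar opT (htilde h q) (htilde h q) = htilde h q" using htilde_ustar[OF hom qd, of q] unfolding qq by (rule sym)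
  moreover have "A \<in> htilde h q" using qA unfolding htilde_def by simp
  ultimately show ?thesis unfolding central_def using hK by blast
qed

lemma uf_closed_htilde_fiber:
  assumes p: "ultrafilter_on p"
  shows "uf_closed {r\<in>deltaS opS. htilde h r = p}"
proof (rule uf_closedI)
  show "ultrafilter_on c" if "c \<in> {r\<in>deltaS opS. htilde h r = p}" for c
    using that deltaS_ultrafilter by blast
  fix r assume r: "ultrafilter_on r" and near: "\<And>A. A \<in> r \<Longrightarrow> \<exists>c\<in>{r\<in>deltaS opS. htilde h r = p}. A \<in> c"
  have "\<exists>c\<in>deltaS opS. A \<in> c" if "A \<in> r" for A
    using near[OF that] by blast
  then have "r \<in> deltaS opS" by (rule uf_closedD[OF uf_closed_deltaS r])
  moreover have "htilde h r \<subseteq> p"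
  proof
    fix B assume "B \<in> htilde h r"
    then have "h -` B \<in> r" by (simp add: htilde_def)
    then obtain c where "htilde h c = p" "h -` B \<in> c" using near by blast
    then show "B \<in> p" by (auto simp: htilde_def)
  qed
  then have "htilde h r = p" by (rule ultrafilter_subset_eq[OF ultrafilter_htilde[OF r] p])
  ultimately show "r \<in> {r\<in>deltaS opS. htilde h r = p}" by blast
qed

section \<open>The closed left ideal J\<delta>(S)\<close>

lemma Wmul_finite:
  assumes "finite W" shows "finite (Wmul op W a)"
proof (rule finite_subset)
  show "Wmul op W a \<subseteq> (\<lambda>w. the (op w a)) ` W" unfolding Wmul_def by force
qed (use assms in simp)

lemma Pf_single: "{x} \<in> Pf UNIV"
  by (simp add: Pf_def)

lemma Jdelta_setD:
  assumes "Jdelta_set op B" "F \<in> Pf (TS op)" "W \<in> Pf UNIV"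
  shows "\<exists>a\<in>sigma op W. \<exists>H\<in>Pf UNIV. \<forall>f\<in>F.
           the (pprod op f H) \<in> sigma op (Wmul op W a) \<and> op a (the (pprod op f H)) \<in> Some ` B"
  using assms unfolding Jdelta_set_def by (elim ballE) auto

text \<open>If \<open>s\<inverse>A\<close> is a J\<delta>-set and \<open>s \<in> \<sigma>(W)\<close>, a witness \<open>a\<close> for \<open>s\<inverse>A\<close> and the set
  \<open>{s} \<union> W s\<close> yields the witness \<open>s a\<close> for \<open>A\<close> and \<open>W\<close>.\<close>

lemma Jdelta_set_sinv_witness:
  assumes ps: "psemigroup op" and J: "Jdelta_set op (sinv op s A)" and s: "s \<in> sigma op W"
    and F: "F \<in> Pf (TS op)" and W: "W \<in> Pf UNIV"
  shows "\<exists>a\<in>sigma op W. \<exists>H\<in>Pf UNIV. \<forall>f\<in>F.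
           the (pprod op f H) \<in> sigma op (Wmul op W a) \<and> op a (the (pprod op f H)) \<in> Some ` A"
proof -
  define W' where "W' = insert s (Wmul op W s)"
  have "finite W" using W unfolding Pf_def by blast
  then have W': "W' \<in> Pf UNIV" unfolding W'_def Pf_def using Wmul_finite by simp
  obtain a H where a: "a \<in> sigma op W'" and H: "H \<in> Pf UNIV"
    and aH: "\<forall>f\<in>F. the (pprod op f H) \<in> sigma op (Wmul op W' a) \<and>
                      op a (the (pprod op f H)) \<in> Some ` (sinv op s A)"
    using Jdelta_setD[OF J F W'] by blast
  obtain a' where a': "op s a = Some a'" using a unfolding W'_def mem_sigma by auto
  have shift: "op w a' = op ws a" if "op w s = Some ws" for w ws
    using psemigroup_Some_assoc[OF ps that, of a] a' by simp
  have ws: "\<exists>ws. op w s = Some ws \<and> ws \<in> W'" if w: "w \<in> W" for w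
  proof -
    obtain ws where "op w s = Some ws" using s w unfolding mem_sigma by blast
    moreover from this have "ws \<in> W'" unfolding W'_def Wmul_def using w by blast
    ultimately show ?thesis by blast
  qed
  have "a' \<in> sigma op W"
    unfolding mem_sigma
  proof
    fix w assume "w \<in> W"
    then obtain ws where "op w s = Some ws" "ws \<in> W'" using ws by blast
    then show "op w a' \<noteq> None" using a shift unfolding mem_sigma by simp
  qed
  moreover have "the (pprod op f H) \<in> sigma op (Wmul op W a') \<and> op a' (the (pprod op f H)) \<in> Some ` A"
    if f: "f \<in> F" for f
  proof
    let ?y = "the (pprod op f H)"
    show "?y \<in> sigma op (Wmul op W a')"
      unfolding mem_sigma
    proof
      fix c assume "c \<in> Wmul op W a'"
      then obtain w where w: "w \<in> W" "op w a' = Some c" unfolding Wmul_def by blast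
      then obtain ws where "op w s = Some ws" "ws \<in> W'" using ws by blast
      then have "c \<in> Wmul op W' a" using w(2) shift unfolding Wmul_def by auto
      then show "op c ?y \<noteq> None" using aH f unfolding mem_sigma by blast
    qed
    obtain b where b: "op a ?y = Some b" "b \<in> sinv op s A" using aH f by blast
    have "op a' ?y = op s b" using psemigroup_Some_assoc[OF ps a', of ?y] b(1) by simp
    then show "op a' ?y \<in> Some ` A" using b(2) unfolding mem_sinv by auto
  qed
  ultimately show ?thesis using H by blast
qed

lemma Jdelta_ustar_left:
  assumes ps: "psemigroup op" and r1: "r1 \<in> deltaS op" and r2: "r2 \<in> Jdelta op"
  shows "ustar op r1 r2 \<in> Jdelta op"
proof -
  have r2d: "r2 \<in> deltaS op" using r2 unfolding Jdelta_def by blast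
  have "Jdelta_set op A" if A: "A \<in> ustar op r1 r2" for A
    unfolding Jdelta_set_def
  proof (intro ballI)
    fix F :: "(nat \<Rightarrow> 'a) set" and W :: "'a set"
    assume F: "F \<in> Pf (TS op)" and W: "W \<in> Pf UNIV"
    have "{s. sinv op s A \<in> r2} \<in> r1" using A unfolding mem_ustar .
    moreover have "sigma op W \<in> r1" using sigma_in_deltaS[OF r1] W unfolding Pf_def by blast
    ultimately obtain s where "sinv op s A \<in> r2" "s \<in> sigma op W"
      using ultrafilter_Int[OF deltaS_ultrafilter[OF r1]] ultrafilter_nonempty[OF deltaS_ultrafilter[OF r1]]
      by (metis IntD1 IntD2 mem_Collect_eq)
    moreover from this have "Jdelta_set op (sinv op s A)" using r2 unfolding Jdelta_def by blast
    ultimately show "\<exists>a\<in>sigma op W. \<exists>H\<in>Pf UNIV. \<forall>f\<in>F.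
        the (pprod op f H) \<in> sigma op (Wmul op W a) \<and> op a (the (pprod op f H)) \<in> Some ` A"
      using Jdelta_set_sinv_witness[OF ps _ _ F W] by blast
  qed
  then show ?thesis unfolding Jdelta_def using ustar_deltaS[OF ps r1 r2d] by blast
qed

lemma uf_closed_Jdelta: "uf_closed (Jdelta op)"
proof (rule uf_closedI)
  show "ultrafilter_on c" if "c \<in> Jdelta op" for c
    using that deltaS_ultrafilter unfolding Jdelta_def by blast
  fix r assume r: "ultrafilter_on r" and near: "\<And>A. A \<in> r \<Longrightarrow> \<exists>c\<in>Jdelta op. A \<in> c"
  have "\<exists>c\<in>deltaS op. A \<in> c" if "A \<in> r" for A
    using near[OF that] unfolding Jdelta_def by blast
  then have "r \<in> deltaS op" by (rule uf_closedD[OF uf_closed_deltaS r])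
  moreover have "Jdelta_set op B" if "B \<in> r" for B
    using near[OF that] unfolding Jdelta_def by blast
  ultimately show "r \<in> Jdelta op" unfolding Jdelta_def by blast
qed

lemma Jdelta_fiber_idempotent:
  assumes ps: "psemigroup opS" and hom: "phom opS opT h"
    and q: "q \<in> Jdelta opS" and hq: "htilde h q = p" and pp: "ustar opT p p = p"
  shows "\<exists>r\<in>Jdelta opS. ustar opS r r = r \<and> htilde h r = p"
proof -
  have qd: "q \<in> deltaS opS" using q unfolding Jdelta_def by blast
  have up: "ultrafilter_on p" using ultrafilter_htilde[OF deltaS_ultrafilter[OF qd], of h] hq by simp
  define X where "X = Jdelta opS \<inter> {r\<in>deltaS opS. htilde h r = p}"
  have "closed_subsemigroup opS X"
    unfolding closed_subsemigroup_def
  proof (intro conjI ballI)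
    show "uf_closed X" unfolding X_def using uf_closed_Int[OF uf_closed_Jdelta uf_closed_htilde_fiber[OF up]] .
    show "X \<noteq> {}" unfolding X_def using q qd hq by blast
    show "X \<subseteq> deltaS opS" unfolding X_def by blast
    fix x y assume "x \<in> X" "y \<in> X"
    then have xy: "x \<in> deltaS opS" "y \<in> Jdelta opS" "y \<in> deltaS opS" "htilde h x = p" "htilde h y = p"
      unfolding X_def by blast+
    have "ustar opS x y \<in> Jdelta opS" using Jdelta_ustar_left[OF ps xy(1,2)] .
    moreover have "htilde h (ustar opS x y) = p" using htilde_ustar[OF hom xy(3)] xy(4,5) pp by simp
    moreover have "ustar opS x y \<in> deltaS opS" using ustar_deltaS[OF ps xy(1,3)] .
    ultimately show "ustar opS x y \<in> X" unfolding X_def by blast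
  qed
  then show ?thesis using closed_subsemigroup_idempotent[OF ps] unfolding X_def by blast
qed

section \<open>Shifting adequate sequences\<close>

lemma sorted_list_of_set_image_add:
  assumes "finite (K :: nat set)"
  shows "sorted_list_of_set ((\<lambda>n. n + m) ` K) = map (\<lambda>n. n + m) (sorted_list_of_set K)"
proof (rule strict_sorted_equal)
  show "sorted_wrt (<) (sorted_list_of_set ((\<lambda>n. n + m) ` K))" by simp
  have "sorted_wrt (<) (sorted_list_of_set K)" by simp
  then show "sorted_wrt (<) (map (\<lambda>n. n + m) (sorted_list_of_set K))"
    unfolding sorted_wrt_map by (rule sorted_wrt_mono_rel[rotated]) simp
  show "set (sorted_list_of_set ((\<lambda>n. n + m) ` K)) = set (map (\<lambda>n. n + m) (sorted_list_of_set K))"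
    using assms by simp
qed

lemma pprod_shift:
  "finite K \<Longrightarrow> pprod op (\<lambda>n. f (n + m)) K = pprod op f ((\<lambda>n. n + m) ` K)"
  unfolding pprod_def by (simp add: sorted_list_of_set_image_add o_def)

lemma Pf_image_add: "K \<in> Pf UNIV \<Longrightarrow> (\<lambda>n. n + m) ` K \<in> Pf (UNIV :: nat set)"
  unfolding Pf_def by simp

lemma Min_image_add: "finite K \<Longrightarrow> K \<noteq> {} \<Longrightarrow> Min ((\<lambda>n::nat. n + m) ` K) = Min K + m"
  by (simp add: mono_Min_commute[symmetric] mono_def)

lemma TS_shift:
  assumes f: "f \<in> TS op" shows "(\<lambda>n. f (n + m)) \<in> TS op"
proof -
  have defined: "\<And>F. F \<in> Pf UNIV \<Longrightarrow> pprod op f F \<noteq> None"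
    and eventually: "\<And>K. K \<in> Pf UNIV \<Longrightarrow> \<exists>k. \<forall>F\<in>Pf UNIV. Min F \<ge> k \<longrightarrow> the (pprod op f F) \<in> sigma op K"
    using f unfolding TS_def adequate_seq_def by blast+
  have "pprod op (\<lambda>n. f (n + m)) F \<noteq> None" if F: "F \<in> Pf UNIV" for F
  proof -
    have "finite F" using F unfolding Pf_def by blast
    then show ?thesis using defined[OF Pf_image_add[OF F]] by (simp add: pprod_shift)
  qed
  moreover have "\<exists>k. \<forall>F\<in>Pf UNIV. Min F \<ge> k \<longrightarrow> the (pprod op (\<lambda>n. f (n + m)) F) \<in> sigma op K"
    if K: "K \<in> Pf UNIV" for K
  proof -
    obtain k where k: "\<And>F. F \<in> Pf UNIV \<Longrightarrow> Min F \<ge> k \<Longrightarrow> the (pprod op f F) \<in> sigma op K"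
      using eventually[OF K] by blast
    have "the (pprod op (\<lambda>n. f (n + m)) F) \<in> sigma op K" if F: "F \<in> Pf UNIV" "Min F \<ge> k" for F
    proof -
      have fin: "finite F" "F \<noteq> {}" using F(1) unfolding Pf_def by blast+
      have "Min ((\<lambda>n. n + m) ` F) \<ge> k" using Min_image_add[OF fin] F(2) by simp
      then have "the (pprod op f ((\<lambda>n. n + m) ` F)) \<in> sigma op K"
        using k[OF Pf_image_add[OF F(1)]] by simp
      then show ?thesis by (simp add: pprod_shift[OF fin(1)])
    qed
    then show ?thesis by blast
  qed
  ultimately show ?thesis unfolding TS_def adequate_seq_def by blast
qed

lemma pprod_defined: "f \<in> TS op \<Longrightarrow> K \<in> Pf UNIV \<Longrightarrow> pprod op f K \<noteq> None"
  unfolding TS_def adequate_seq_def by blast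

section \<open>Members of idempotents in J\<delta>(S) are C-sets\<close>

text \<open>A chain is a list of pairs \<open>(G\<^sub>i, f\<^sub>i)\<close> with \<open>f\<^sub>i \<in> G\<^sub>i\<close> and \<open>G\<^sub>1 \<subset> \<dots> \<subset> G\<^sub>m\<close>, as in
  the definition of a C-set; \<open>g\<close> stands for the pair of functions \<open>(\<alpha>, H)\<close>.\<close>

definition is_chain :: "'a pop \<Rightarrow> ((nat \<Rightarrow> 'a) set \<times> (nat \<Rightarrow> 'a)) list \<Rightarrow> bool" where
  "is_chain op cs \<longleftrightarrow> cs \<noteq> [] \<and> (\<forall>x\<in>set cs. fst x \<in> Pf (TS op) \<and> snd x \<in> fst x) \<and>
     sorted_wrt (\<subset>) (map fst cs)"

definition chain_factor ::
  "'a pop \<Rightarrow> ((nat \<Rightarrow> 'a) set \<Rightarrow> 'a \<times> nat set) \<Rightarrow> (nat \<Rightarrow> 'a) set \<times> (nat \<Rightarrow> 'a) \<Rightarrow> 'a option" where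
  "chain_factor op g = (\<lambda>(G, f). Option.bind (pprod op f (snd (g G))) (op (fst (g G))))"

definition chain_prod ::
  "'a pop \<Rightarrow> ((nat \<Rightarrow> 'a) set \<Rightarrow> 'a \<times> nat set) \<Rightarrow> ((nat \<Rightarrow> 'a) set \<times> (nat \<Rightarrow> 'a)) list \<Rightarrow> 'a option" where
  "chain_prod op g cs = oprod op (map (chain_factor op g) cs)"

definition chains_below :: "'a pop \<Rightarrow> (nat \<Rightarrow> 'a) set \<Rightarrow> ((nat \<Rightarrow> 'a) set \<times> (nat \<Rightarrow> 'a)) list set" where
  "chains_below op F = {cs. is_chain op cs \<and> fst (last cs) \<subset> F}"

lemma is_chain_last:
  assumes "is_chain op cs" shows "fst (last cs) \<in> Pf (TS op)" "snd (last cs) \<in> fst (last cs)"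
proof -
  have "last cs \<in> set cs" using assms unfolding is_chain_def by simp
  then show "fst (last cs) \<in> Pf (TS op)" "snd (last cs) \<in> fst (last cs)"
    using assms unfolding is_chain_def by blast+
qed

lemma is_chain_snoc:
  assumes "is_chain op cs"
  shows "set cs = set (butlast cs) \<union> {last cs}"
    and "sorted_wrt (\<subset>) (map fst (butlast cs) @ [fst (last cs)])"
proof -
  have ne: "cs \<noteq> []" using assms unfolding is_chain_def by blast
  have "set cs = set (butlast cs @ [last cs])" using ne by simp
  then show "set cs = set (butlast cs) \<union> {last cs}" by simp
  have "map fst (butlast cs) @ [fst (last cs)] = map fst (butlast cs @ [last cs])" by simp
  also have "\<dots> = map fst cs" using ne by simp
  finally show "sorted_wrt (\<subset>) (map fst (butlast cs) @ [fst (last cs)])"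
    using assms unfolding is_chain_def by simp
qed

lemma is_chain_butlast:
  assumes cs: "is_chain op cs" and ne: "butlast cs \<noteq> []"
  shows "is_chain op (butlast cs)" "fst (last (butlast cs)) \<subset> fst (last cs)"
proof -
  have sorted: "sorted_wrt (\<subset>) (map fst (butlast cs))"
    and below: "\<And>x. x \<in> set (butlast cs) \<Longrightarrow> fst x \<subset> fst (last cs)"
    using is_chain_snoc(2)[OF cs] unfolding sorted_wrt_append by auto
  have "set (butlast cs) \<subseteq> set cs" using is_chain_snoc(1)[OF cs] by blast
  then show "is_chain op (butlast cs)" using cs ne sorted unfolding is_chain_def by blast
  show "fst (last (butlast cs)) \<subset> fst (last cs)" using below ne by simp
qed

lemma chains_below_mem_subset:
  assumes "cs \<in> chains_below op F" "x \<in> set cs"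
  shows "fst x \<subset> F"
proof -
  have cs: "is_chain op cs" and last: "fst (last cs) \<subset> F"
    using assms(1) unfolding chains_below_def by blast+
  have "\<forall>y\<in>set (butlast cs). fst y \<subset> fst (last cs)"
    using is_chain_snoc(2)[OF cs] unfolding sorted_wrt_append by simp
  then show ?thesis using assms(2) last is_chain_snoc(1)[OF cs] by auto
qed

lemma sorted_wrt_less_distinct: "sorted_wrt (<) xs \<Longrightarrow> distinct (xs :: 'b :: order list)"
  by (induction xs) auto

lemma chains_below_finite:
  assumes F: "finite F" shows "finite (chains_below op F)"
proof (rule finite_subset)
  show "chains_below op F \<subseteq> {cs. set cs \<subseteq> Pow F \<times> F \<and> distinct cs}"
  proof
    fix cs assume cs: "cs \<in> chains_below op F"
    then have chain: "is_chain op cs" unfolding chains_below_def by blast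
    have "fst x \<subset> F \<and> snd x \<in> fst x" if "x \<in> set cs" for x
      using chains_below_mem_subset[OF cs that] chain that unfolding is_chain_def by auto
    then have "set cs \<subseteq> Pow F \<times> F" by fastforce
    moreover have "distinct (map fst cs)"
      using chain sorted_wrt_less_distinct unfolding is_chain_def by blast
    then have "distinct cs" by (simp add: distinct_map)
    ultimately show "cs \<in> {cs. set cs \<subseteq> Pow F \<times> F \<and> distinct cs}" by blast
  qed
  show "finite {cs. set cs \<subseteq> Pow F \<times> F \<and> distinct cs}"
    using F by (intro finite_subset_distinct) simp
qed

lemma chain_prod_snoc:
  "cs \<noteq> [] \<Longrightarrow> chain_prod op g (cs @ [x]) =
     Option.bind (chain_prod op g cs) (\<lambda>a. Option.bind (chain_factor op g x) (op a))"
  unfolding chain_prod_def by (cases cs) simp_all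

locale Jdelta_idempotent_member =
  fixes op :: "'a pop" and r :: "'a set set" and C :: "'a set"
  assumes ps: "psemigroup op" and r_Jdelta: "r \<in> Jdelta op" and r_idem: "ustar op r r = r"
    and C: "C \<in> r"
begin

lemma r_deltaS: "r \<in> deltaS op"
  using r_Jdelta unfolding Jdelta_def by blast

lemma r_ultrafilter: "ultrafilter_on r"
  using deltaS_ultrafilter[OF r_deltaS] .

definition C_star :: "'a set" where
  "C_star = {x\<in>C. sinv op x C \<in> r}"

lemma C_star_in: "C_star \<in> r"
proof -
  have "C \<in> ustar op r r" using C r_idem by simp
  then have "{x. sinv op x C \<in> r} \<in> r" by (simp only: mem_ustar)
  then have "C \<inter> {x. sinv op x C \<in> r} \<in> r" by (rule ultrafilter_Int[OF r_ultrafilter C])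
  moreover have "C \<inter> {x. sinv op x C \<in> r} = C_star" unfolding C_star_def by blast
  ultimately show ?thesis by simp
qed

lemma sinv_C_star:
  assumes x: "x \<in> C_star" shows "sinv op x C_star \<in> r"
proof -
  have xC: "sinv op x C \<in> r" using x unfolding C_star_def by blast
  then have "sinv op x C \<in> ustar op r r" using r_idem by simp
  then have "{y. sinv op y (sinv op x C) \<in> r} \<in> r" by (simp only: mem_ustar)
  then have "sinv op x C \<inter> {y. sinv op y (sinv op x C) \<in> r} \<in> r"
    using ultrafilter_Int[OF r_ultrafilter xC] by blast
  moreover have "sinv op x C \<inter> {y. sinv op y (sinv op x C) \<in> r} \<subseteq> sinv op x C_star"
  proof
    fix y assume y: "y \<in> sinv op x C \<inter> {y. sinv op y (sinv op x C) \<in> r}"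
    then obtain u where u: "op x y = Some u" "u \<in> C" by (auto simp: mem_sinv)
    have "sinv op u C \<in> r" using y sinv_sinv[OF ps u(1)] by simp
    then show "y \<in> sinv op x C_star" using u unfolding C_star_def mem_sinv by simp
  qed
  ultimately show ?thesis by (rule ultrafilter_mono[OF r_ultrafilter])
qed

text \<open>\<open>target g F\<close> is where \<open>\<alpha>(F) \<Prod>\<^sub>t\<^sub>\<in>\<^sub>H\<^sub>(\<^sub>F\<^sub>) f(t)\<close> must land: inside \<open>C_star\<close>, and such
  that multiplying any earlier chain product by it stays inside \<open>C_star\<close>.\<close>

definition target :: "((nat \<Rightarrow> 'a) set \<Rightarrow> 'a \<times> nat set) \<Rightarrow> (nat \<Rightarrow> 'a) set \<Rightarrow> 'a set" where
  "target g F = C_star \<inter> (\<Inter>cs\<in>chains_below op F. sinv op (the (chain_prod op g cs)) C_star)"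

definition admissible :: "((nat \<Rightarrow> 'a) set \<Rightarrow> 'a \<times> nat set) \<Rightarrow> (nat \<Rightarrow> 'a) set \<Rightarrow> 'a \<times> nat set \<Rightarrow> bool" where
  "admissible g F z \<longleftrightarrow> snd z \<in> Pf UNIV \<and>
     (\<forall>G. G \<subset> F \<and> G \<in> Pf (TS op) \<longrightarrow> Max (snd (g G)) < Min (snd z)) \<and>
     (\<forall>f\<in>F. op (fst z) (the (pprod op f (snd z))) \<in> Some ` target g F)"

definition alpha_H :: "(nat \<Rightarrow> 'a) set \<Rightarrow> 'a \<times> nat set" where
  "alpha_H = wfrec finite_psubset (\<lambda>g F. SOME z. admissible g F z)"

lemma admissible_cong:
  assumes eq: "\<And>G. G \<subset> F \<Longrightarrow> g G = g' G"
  shows "admissible g F = admissible g' F"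
proof -
  have "chain_prod op g cs = chain_prod op g' cs" if cs: "cs \<in> chains_below op F" for cs
  proof -
    have "chain_factor op g x = chain_factor op g' x" if "x \<in> set cs" for x
      using eq[OF chains_below_mem_subset[OF cs that]] unfolding chain_factor_def by (simp add: case_prod_beta)
    then show ?thesis unfolding chain_prod_def by (metis map_eq_conv)
  qed
  then have target: "target g F = target g' F" unfolding target_def by (metis (no_types, lifting) INF_cong)
  have "(\<forall>G. G \<subset> F \<and> G \<in> Pf (TS op) \<longrightarrow> Max (snd (g G)) < m) \<longleftrightarrow>
        (\<forall>G. G \<subset> F \<and> G \<in> Pf (TS op) \<longrightarrow> Max (snd (g' G)) < m)" for m
    using eq by auto
  then show ?thesis unfolding admissible_def target by (intro ext) simp
qed

lemma alpha_H_eq: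
  assumes "finite F" shows "alpha_H F = (SOME z. admissible alpha_H F z)"
proof -
  have "alpha_H F = (SOME z. admissible (cut alpha_H finite_psubset F) F z)"
    unfolding alpha_H_def by (rule wfrec[OF wf_finite_psubset])
  also have "admissible (cut alpha_H finite_psubset F) F = admissible alpha_H F"
    by (rule admissible_cong) (use assms in \<open>simp add: cut_apply finite_psubset_def\<close>)
  finally show ?thesis .
qed

lemma target_in:
  assumes F: "finite F" and below: "\<And>cs. cs \<in> chains_below op F \<Longrightarrow> chain_prod op g cs \<in> Some ` C_star"
  shows "target g F \<in> r"
proof -
  have "sinv op (the (chain_prod op g cs)) C_star \<in> r" if "cs \<in> chains_below op F" for cs
    using below[OF that] sinv_C_star by force
  then have "(\<Inter>cs\<in>chains_below op F. sinv op (the (chain_prod op g cs)) C_star) \<in> r"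
    by (rule ultrafilter_INT[OF r_ultrafilter chains_below_finite[OF F]])
  then show ?thesis unfolding target_def by (rule ultrafilter_Int[OF r_ultrafilter C_star_in])
qed

text \<open>Shifting the sequences in \<open>F\<close> by \<open>m\<close> turns a J\<delta>-witness \<open>(a, K)\<close> for the target into
  the admissible choice \<open>(a, K + m)\<close>, with \<open>m\<close> beyond all earlier sets \<open>H(G)\<close>.\<close>

lemma admissible_exists:
  assumes F: "F \<in> Pf (TS op)" and target: "target g F \<in> r"
    and below: "\<And>G. G \<subset> F \<Longrightarrow> G \<in> Pf (TS op) \<Longrightarrow> snd (g G) \<in> Pf UNIV"
  shows "\<exists>z. admissible g F z"
proof -
  have finF: "finite F" and FT: "F \<subseteq> TS op" and Fne: "F \<noteq> {}" using F unfolding Pf_def by blast+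
  define U where "U = (\<Union>G\<in>{G. G \<subset> F \<and> G \<in> Pf (TS op)}. snd (g G))"
  have "{G. G \<subset> F \<and> G \<in> Pf (TS op)} \<subseteq> Pow F" by blast
  then have "finite {G. G \<subset> F \<and> G \<in> Pf (TS op)}" using finF by (simp add: finite_subset)
  then have finU: "finite U" unfolding U_def by (rule finite_UN_I) (use below in \<open>simp add: Pf_def\<close>)
  define m where "m = Suc (Max (insert 0 U))"
  have Max_below: "Max (snd (g G)) < m" if "G \<subset> F" "G \<in> Pf (TS op)" for G
  proof -
    have "finite (snd (g G))" "snd (g G) \<noteq> {}" using below[OF that] unfolding Pf_def by blast+
    then have "Max (snd (g G)) \<in> insert 0 U" unfolding U_def using that Max_in by blast
    then show ?thesis unfolding m_def using finU by (simp add: le_imp_less_Suc)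
  qed
  define shift where "shift f = (\<lambda>n. f (n + m))" for f :: "nat \<Rightarrow> 'a"
  have shifted: "shift ` F \<in> Pf (TS op)"
    using FT Fne finF TS_shift unfolding Pf_def shift_def by auto
  have J: "Jdelta_set op (target g F)" using r_Jdelta target unfolding Jdelta_def by blast
  obtain a K where K: "K \<in> Pf UNIV"
    and aK: "\<forall>f\<in>shift ` F. op a (the (pprod op f K)) \<in> Some ` target g F"
    using Jdelta_setD[OF J shifted Pf_single[of undefined]] by blast
  have finK: "finite K" "K \<noteq> {}" using K unfolding Pf_def by blast+
  have "admissible g F (a, (\<lambda>n. n + m) ` K)"
    unfolding admissible_def fst_conv snd_conv
  proof (intro conjI allI impI ballI)
    show "(\<lambda>n. n + m) ` K \<in> Pf UNIV" using Pf_image_add[OF K] .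
    show "Max (snd (g G)) < Min ((\<lambda>n. n + m) ` K)" if "G \<subset> F \<and> G \<in> Pf (TS op)" for G
    proof -
      have "Max (snd (g G)) < m" using Max_below that by blast
      then show ?thesis unfolding Min_image_add[OF finK] by simp
    qed
    show "op a (the (pprod op f ((\<lambda>n. n + m) ` K))) \<in> Some ` target g F" if "f \<in> F" for f
    proof -
      have "op a (the (pprod op (shift f) K)) \<in> Some ` target g F" using aK that by blast
      then show ?thesis unfolding shift_def pprod_shift[OF finK(1)] .
    qed
  qed
  then show ?thesis by blast
qed

lemma chain_prod_in_C_star:
  assumes adm: "admissible g F (g F)"
    and below: "\<And>cs. cs \<in> chains_below op F \<Longrightarrow> chain_prod op g cs \<in> Some ` C_star"
    and cs: "is_chain op cs" "fst (last cs) = F"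
  shows "chain_prod op g cs \<in> Some ` C_star"
proof -
  obtain f where last: "last cs = (F, f)" using cs(2) by (cases "last cs") simp
  have "f \<in> F" "F \<in> Pf (TS op)" using is_chain_last[OF cs(1)] unfolding last by simp_all
  then have fT: "f \<in> TS op" unfolding Pf_def by blast
  have K: "snd (g F) \<in> Pf UNIV" using adm unfolding admissible_def by blast
  obtain y where y: "pprod op f (snd (g F)) = Some y" using pprod_defined[OF fT K] by blast
  obtain b where b: "op (fst (g F)) y = Some b" "b \<in> target g F"
    using adm \<open>f \<in> F\<close> y unfolding admissible_def by force
  have factor: "chain_factor op g (last cs) = Some b" unfolding chain_factor_def last using y b(1) by simp
  have ne: "cs \<noteq> []" using cs(1) unfolding is_chain_def by blast
  show ?thesis
  proof (cases "butlast cs = []")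
    case True
    then have "cs = [last cs]" using append_butlast_last_id[OF ne] by simp
    then have "chain_prod op g cs = Some b" using factor unfolding chain_prod_def by (metis oprod.simps(2) foldl_Nil list.simps(8,9))
    moreover have "b \<in> C_star" using b(2) unfolding target_def by blast
    ultimately show ?thesis by blast
  next
    case False
    have earlier: "butlast cs \<in> chains_below op F"
      using is_chain_butlast[OF cs(1) False] cs(2) unfolding chains_below_def by simp
    then obtain x where x: "chain_prod op g (butlast cs) = Some x" "x \<in> C_star" using below by blast
    have "b \<in> sinv op x C_star" using b(2) earlier x(1) unfolding target_def by force
    then obtain c where c: "op x b = Some c" "c \<in> C_star" unfolding mem_sinv by auto
    have "chain_prod op g cs = chain_prod op g (butlast cs @ [last cs])" using ne by simp
    also have "\<dots> = Some c" using chain_prod_snoc[OF False] x(1) factor c(1) by simp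
    finally show ?thesis using c(2) by blast
  qed
qed

lemma alpha_H_invariant:
  assumes "F \<in> Pf (TS op)"
  shows "admissible alpha_H F (alpha_H F) \<and>
    (\<forall>cs. is_chain op cs \<and> fst (last cs) = F \<longrightarrow> chain_prod op alpha_H cs \<in> Some ` C_star)"
proof -
  have "finite F" using assms unfolding Pf_def by blast
  then show ?thesis using assms
  proof (induction F rule: finite_psubset_induct)
    case (psubset F)
    have below: "chain_prod op alpha_H cs \<in> Some ` C_star" if "cs \<in> chains_below op F" for cs
    proof -
      have "is_chain op cs" "fst (last cs) \<subset> F" using that unfolding chains_below_def by blast+
      then show ?thesis using psubset.IH[of "fst (last cs)"] is_chain_last by blast
    qed
    have "target alpha_H F \<in> r" using target_in[OF psubset.hyps below] .
    moreover have "snd (alpha_H G) \<in> Pf UNIV" if "G \<subset> F" "G \<in> Pf (TS op)" for G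
      using psubset.IH[OF that] unfolding admissible_def by blast
    ultimately have "\<exists>z. admissible alpha_H F z" using admissible_exists[OF psubset.prems] by blast
    then have adm: "admissible alpha_H F (alpha_H F)" unfolding alpha_H_eq[OF psubset.hyps] by (rule someI_ex)
    then show ?case using chain_prod_in_C_star[OF adm below] by blast
  qed
qed

end

lemma is_chain_zip:
  assumes ne: "Gs \<noteq> []" and len: "length fs = length Gs"
    and mem: "\<forall>i<length Gs. Gs ! i \<in> Pf (TS op) \<and> fs ! i \<in> Gs ! i"
    and incr: "\<forall>i. Suc i < length Gs \<longrightarrow> Gs ! i \<subset> Gs ! Suc i"
  shows "is_chain op (zip Gs fs)" "fst (last (zip Gs fs)) = last Gs"
proof -
  have zne: "zip Gs fs \<noteq> []" using ne len by (cases Gs; cases fs) auto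
  moreover have "fst x \<in> Pf (TS op) \<and> snd x \<in> fst x" if "x \<in> set (zip Gs fs)" for x
    using that mem len by (auto simp: set_zip)
  moreover have "sorted_wrt (\<subset>) Gs"
    using incr sorted_wrt_iff_nth_Suc_transp[OF transp_on_less] by blast
  ultimately show "is_chain op (zip Gs fs)" unfolding is_chain_def using len by simp
  show "fst (last (zip Gs fs)) = last Gs"
    using len ne by (simp add: last_conv_nth[OF zne] last_conv_nth[OF ne] nth_zip)
qed

lemma map_chain_factor_zip:
  assumes "length fs = length Gs"
  shows "map (\<lambda>i. Option.bind (pprod op (fs ! i) (snd (g (Gs ! i)))) (op (fst (g (Gs ! i))))) [0..<length Gs]
    = map (chain_factor op g) (zip Gs fs)"
  using assms by (intro nth_equalityI) (simp_all add: chain_factor_def)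

context Jdelta_idempotent_member
begin

theorem C_is_C_set: "C_set op C"
  unfolding C_set_def
proof (intro exI[of _ "\<lambda>F. fst (alpha_H F)"] exI[of _ "\<lambda>F. snd (alpha_H F)"] conjI allI impI ballI)
  show "snd (alpha_H F) \<in> Pf UNIV" if "F \<in> Pf (TS op)" for F
    using alpha_H_invariant[OF that] unfolding admissible_def by blast
  show "Max (snd (alpha_H F)) < Min (snd (alpha_H G))" if "F \<in> Pf (TS op)" "G \<in> Pf (TS op)" "F \<subset> G" for F G
    using alpha_H_invariant[OF that(2)] that(1,3) unfolding admissible_def by blast
  fix Gs :: "(nat \<Rightarrow> 'a) set list" and fs :: "(nat \<Rightarrow> 'a) list"
  assume "Gs \<noteq> [] \<and> length fs = length Gs \<and> (\<forall>i<length Gs. Gs ! i \<in> Pf (TS op) \<and> fs ! i \<in> Gs ! i) \<and>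
    (\<forall>i. Suc i < length Gs \<longrightarrow> Gs ! i \<subset> Gs ! Suc i)"
  then have ne: "Gs \<noteq> []" and len: "length fs = length Gs"
    and mem: "\<forall>i<length Gs. Gs ! i \<in> Pf (TS op) \<and> fs ! i \<in> Gs ! i"
    and incr: "\<forall>i. Suc i < length Gs \<longrightarrow> Gs ! i \<subset> Gs ! Suc i" by blast+
  have "last Gs \<in> Pf (TS op)" using mem ne by (simp add: last_conv_nth)
  then have "chain_prod op alpha_H (zip Gs fs) \<in> Some ` C_star"
    using alpha_H_invariant is_chain_zip[OF ne len mem incr] by blast
  then show "oprod op (map (\<lambda>i. Option.bind (pprod op (fs ! i) (snd (alpha_H (Gs ! i))))
      (op (fst (alpha_H (Gs ! i))))) [0..<length Gs]) \<in> Some ` C"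
    unfolding map_chain_factor_zip[OF len] chain_prod_def[symmetric] C_star_def by blast
qed

end

theorem corollary5p8:
  fixes opS :: "'a pop" and opT :: "'b pop" and h :: "'a \<Rightarrow> 'b"
    and A :: "'b set" and p :: "'b set set"
  assumes "psemigroup opS" "pcomm opS" "adequate opS"
    and "psemigroup opT" "pcomm opT" "adequate opT"
    and "phom opS opT h" "surj h"
    and "htilde h ` deltaS opS = deltaS opT"
    and "\<not> central opT A"
    and "A \<in> p" "p \<in> htilde h ` Jdelta opS" "ustar opT p p = p"
  shows "C_set opS (h -` A) \<and> \<not> central opS (h -` A)"
proof
  obtain q where q: "q \<in> Jdelta opS" "htilde h q = p" using assms(12) by blast
  obtain r where r: "r \<in> Jdelta opS" "ustar opS r r = r" "htilde h r = p"
    using Jdelta_fiber_idempotent[OF assms(1,7) q assms(13)] by blast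
  have "h -` A \<in> r" using assms(11) r(3) unfolding htilde_def by blast
  then interpret Jdelta_idempotent_member opS r "h -` A"
    using assms(1) r(1,2) by unfold_locales
  show "C_set opS (h -` A)" by (rule C_is_C_set)
  show "\<not> central opS (h -` A)"
    using central_of_central_preimage[OF assms(1,3,4,6,7,9)] assms(10) by blast
qed

end
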